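(* Assume $\mathcal R_0>1$ and let $k$ satisfy $$\frac{\beta_E\nu\nu_E-(\nu_E+\delta_E)\delta_F}{\beta_E\nu\nu_E-(1-\gamma_s)(\nu_E+\delta_E)\delta_F}\,\delta_s<k<\delta_s.$$ Then $\mathcal M:=\mathcal M(\overline\kappa)$ is positively invariant and $\mathbf 0$ is globally asymptotically stable in $\mathcal M$ (in the Filippov sense) for the closed-loop system $$\dot E=\beta_E F\Big(1-\frac EK\Big)-(\nu_E+\delta_E)E,\quad \dot M=(1-\nu)\nu_E E-\delta_M M,\quad \dot F=\nu\nu_E E\frac{M}{M+\gamma_sM_s}-\delta_F F,\quad \dot M_s=k(M+M_s)-\delta_sM_s.$$
   Context: Parameters: $\beta_E,\nu_E,\delta_E,\delta_M,\delta_F,\delta_s,K>0$, $\nu\in(0,1)$, $\gamma_s\in(0,1]$, $\delta_s\ge\delta_M$. $\mathcal R_0:=\dfrac{\beta_E\nu\nu_E}{\delta_F(\nu_E+\delta_E)}$. $\mathcal D'=[0,+\infty)^4$, $z=(E,M,F,M_s)^T$. $\overline\kappa:=\dfrac{\gamma_s\delta_F(\nu_E+\delta_E)}{\beta_E\nu\nu_E-\delta_F(\nu_E+\delta_E)}$. $\mathcal T_1=\{z\in\mathcal D':\beta_EF(1-E/K)\le(\nu_E+\delta_E)E\}$, $\mathcal T_2(\kappa)=\{z\in\mathcal D':M\le\kappa M_s\}$, $\mathcal T_3=\{z\in\mathcal D':(1-\nu)\nu_EE\le\delta_MM\}$, $\mathcal M(\kappa)=\mathcal T_1\cap\mathcal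 T_2(\kappa)\cap\mathcal T_3$. Filippov solutions: locally Lipschitz $z:I\to\mathcal D'$ with $\dot z(t)\in\bigcap_{\varepsilon>0}\bigcap_{N}\overline{\mathrm{conv}}\,X\big(((z(t)+\varepsilon B)\cap\mathcal D')\setminus N\big)$ for a.e. $t$ ($X$ the closed-loop right-hand side, $B$ unit ball of $\mathbb R^4$, $N$ Lebesgue-null). Globally asymptotically stable in $\mathcal S$: for every $\varepsilon>0$ there is $\delta>0$ such that every Filippov solution with $z(0)\in\mathcal S$, $\|z(0)\|<\delta$ satisfies $\|z(t)\|<\varepsilon$ for all $t>0$, and every Filippov solution with $z(0)\in\mathcal S$ tends to $\mathbf 0$. *)

theory Defs
  imports "HOL-Analysis.Analysis"
begin

text \<open>State vector z = (E, M, F, M_s) as z$1, z$2, z$3, z$4.\<close>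

definition Dprime :: "(real^4) set" where
  "Dprime = {z. \<forall>i. 0 \<le> z $ i}"

definition closed_loop ::
  "real \<Rightarrow> real \<Rightarrow> real \<Rightarrow> real \<Rightarrow> real \<Rightarrow> real \<Rightarrow> real \<Rightarrow> real \<Rightarrow> real \<Rightarrow> real
   \<Rightarrow> real^4 \<Rightarrow> real^4" where
  "closed_loop \<beta>E \<nu>E \<delta>E \<delta>M \<delta>F \<delta>s K \<nu> \<gamma>s k z =
     (let E = z $ 1; M = z $ 2; F = z $ 3; Ms = z $ 4 in
      vector [\<beta>E * F * (1 - E / K) - (\<nu>E + \<delta>E) * E,
              (1 - \<nu>) * \<nu>E * E - \<delta>M * M,
              \<nu> * \<nu>E * E * (M / (M + \<gamma>s * Ms)) - \<delta>F * F,
              k * (M + Ms) - \<delta>s * Ms])"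

definition R0 :: "real \<Rightarrow> real \<Rightarrow> real \<Rightarrow> real \<Rightarrow> real \<Rightarrow> real" where
  "R0 \<beta>E \<nu>E \<delta>E \<delta>F \<nu> = (\<beta>E * \<nu> * \<nu>E) / (\<delta>F * (\<nu>E + \<delta>E))"

definition kappa_bar :: "real \<Rightarrow> real \<Rightarrow> real \<Rightarrow> real \<Rightarrow> real \<Rightarrow> real \<Rightarrow> real" where
  "kappa_bar \<beta>E \<nu>E \<delta>E \<delta>F \<nu> \<gamma>s =
     \<gamma>s * \<delta>F * (\<nu>E + \<delta>E) / (\<beta>E * \<nu> * \<nu>E - \<delta>F * (\<nu>E + \<delta>E))"

definition T1 :: "real \<Rightarrow> real \<Rightarrow> real \<Rightarrow> real \<Rightarrow> (real^4) set" where
  "T1 \<beta>E \<nu>E \<delta>E K = {z \<in> Dprime. \<beta>E * z$3 * (1 - z$1 / K) \<le> (\<nu>E + \<delta>E) * z$1}"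

definition T2 :: "real \<Rightarrow> (real^4) set" where
  "T2 \<kappa> = {z \<in> Dprime. z$2 \<le> \<kappa> * z$4}"

definition T3 :: "real \<Rightarrow> real \<Rightarrow> real \<Rightarrow> (real^4) set" where
  "T3 \<nu> \<nu>E \<delta>M = {z \<in> Dprime. (1 - \<nu>) * \<nu>E * z$1 \<le> \<delta>M * z$2}"

definition Mset :: "real \<Rightarrow> real \<Rightarrow> real \<Rightarrow> real \<Rightarrow> real \<Rightarrow> real \<Rightarrow> real \<Rightarrow> (real^4) set" where
  "Mset \<beta>E \<nu>E \<delta>E \<delta>M K \<nu> \<kappa> = T1 \<beta>E \<nu>E \<delta>E K \<inter> T2 \<kappa> \<inter> T3 \<nu> \<nu>E \<delta>M"

definition filippov_set :: "(real^4 \<Rightarrow> real^4) \<Rightarrow> (real^4) set \<Rightarrow> real^4 \<Rightarrow> (real^4) set" where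
  "filippov_set X D z =
     (\<Inter>\<epsilon>\<in>{0<..}. \<Inter>N\<in>null_sets lebesgue.
        closure (convex hull (X ` ((cball z \<epsilon> \<inter> D) - N))))"

definition filippov_solution ::
  "(real^4 \<Rightarrow> real^4) \<Rightarrow> (real^4) set \<Rightarrow> (real \<Rightarrow> real^4) \<Rightarrow> real set \<Rightarrow> bool" where
  "filippov_solution X D z I \<longleftrightarrow>
     is_interval I \<and> z ` I \<subseteq> D \<and>
     (\<forall>t\<in>I. \<exists>\<delta>>0. \<exists>L. L-lipschitz_on (cball t \<delta> \<inter> I) z) \<and>
     (\<exists>N\<in>null_sets lebesgue. \<forall>t\<in>I - N. \<exists>v.
        (z has_vector_derivative v) (at t within I) \<and> v \<in> filippov_set X D (z t))"

end

theory Submission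
  imports Defs
begin

(* Invariance of M: the total violation V of the three inequalities defining M is locally
   Lipschitz along a Filippov solution and, off a null set, has upper right Dini derivative at
   most C V, because Filippov velocities obey every closed convex constraint satisfied by the
   vector field nearby.  A Gronwall lemma for such functions (monotonicity follows since
   Lipschitz maps send null sets to null sets) forces V = 0.  Stability: on M the function
   L = E + w_F F + w_W (rho M - M_s)^+ + w_M M + w_S M_s satisfies L' <= -c L, so L, which is
   comparable to the norm on the nonnegative orthant, decays exponentially. *)

section \<open>Pointwise Lipschitz functions and right Dini derivatives\<close>

text \<open>The local hypothesis of \<open>negligible_locally_Lipschitz_image\<close>.\<close>
definition pointwise_lipschitz :: "(real \<Rightarrow> real) \<Rightarrow> real set \<Rightarrow> real \<Rightarrow> bool" where
  "pointwise_lipschitz f S x \<longleftrightarrow>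
     (\<exists>T B. open T \<and> x \<in> T \<and> (\<forall>y\<in>S \<inter> T. \<bar>f y - f x\<bar> \<le> B * \<bar>y - x\<bar>))"

lemma pointwise_lipschitz_subset:
  "pointwise_lipschitz f S x \<Longrightarrow> S' \<subseteq> S \<Longrightarrow> pointwise_lipschitz f S' x"
  unfolding pointwise_lipschitz_def by blast

lemma pointwise_lipschitz_const: "pointwise_lipschitz (\<lambda>_. c) S x"
  unfolding pointwise_lipschitz_def by (rule exI[of _ UNIV], rule exI[of _ 0]) auto

lemma pointwise_lipschitz_ident: "pointwise_lipschitz (\<lambda>y. y) S x"
  unfolding pointwise_lipschitz_def by (rule exI[of _ UNIV], rule exI[of _ 1]) auto

lemma pointwise_lipschitz_add:
  assumes "pointwise_lipschitz f S x" "pointwise_lipschitz g S x"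
  shows "pointwise_lipschitz (\<lambda>y. f y + g y) S x"
proof -
  obtain T1 B1 where 1: "open T1" "x \<in> T1" "\<forall>y\<in>S \<inter> T1. \<bar>f y - f x\<bar> \<le> B1 * \<bar>y - x\<bar>"
    using assms(1) unfolding pointwise_lipschitz_def by blast
  obtain T2 B2 where 2: "open T2" "x \<in> T2" "\<forall>y\<in>S \<inter> T2. \<bar>g y - g x\<bar> \<le> B2 * \<bar>y - x\<bar>"
    using assms(2) unfolding pointwise_lipschitz_def by blast
  show ?thesis unfolding pointwise_lipschitz_def
  proof (intro exI conjI ballI)
    fix y assume "y \<in> S \<inter> (T1 \<inter> T2)"
    with 1 2 have "\<bar>f y - f x\<bar> \<le> B1 * \<bar>y - x\<bar>" "\<bar>g y - g x\<bar> \<le> B2 * \<bar>y - x\<bar>" by auto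
    then show "\<bar>f y + g y - (f x + g x)\<bar> \<le> (B1 + B2) * \<bar>y - x\<bar>" by (simp add: algebra_simps)
  qed (use 1 2 in auto)
qed

lemma pointwise_lipschitz_minus:
  "pointwise_lipschitz f S x \<Longrightarrow> pointwise_lipschitz (\<lambda>y. - f y) S x"
  unfolding pointwise_lipschitz_def by (simp add: abs_minus_commute)

lemma pointwise_lipschitz_diff:
  "pointwise_lipschitz f S x \<Longrightarrow> pointwise_lipschitz g S x \<Longrightarrow> pointwise_lipschitz (\<lambda>y. f y - g y) S x"
  using pointwise_lipschitz_add[of f S x "\<lambda>y. - g y"] pointwise_lipschitz_minus by simp

lemma pointwise_lipschitz_max0:
  assumes "pointwise_lipschitz f S x"
  shows "pointwise_lipschitz (\<lambda>y. max 0 (f y)) S x"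
proof -
  have "\<bar>max 0 (f y) - max 0 (f x)\<bar> \<le> \<bar>f y - f x\<bar>" for y
    by (simp add: max_def abs_if)
  with assms show ?thesis
    unfolding pointwise_lipschitz_def by (meson order_trans)
qed

lemma pointwise_lipschitz_mult:
  assumes "pointwise_lipschitz f S x" "pointwise_lipschitz g S x"
  shows "pointwise_lipschitz (\<lambda>y. f y * g y) S x"
proof -
  obtain T1 B1 where 1: "open T1" "x \<in> T1" "\<forall>y\<in>S \<inter> T1. \<bar>f y - f x\<bar> \<le> B1 * \<bar>y - x\<bar>"
    using assms(1) unfolding pointwise_lipschitz_def by blast
  obtain T2 B2 where 2: "open T2" "x \<in> T2" "\<forall>y\<in>S \<inter> T2. \<bar>g y - g x\<bar> \<le> B2 * \<bar>y - x\<bar>"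
    using assms(2) unfolding pointwise_lipschitz_def by blast
  define B where "B = (\<bar>f x\<bar> + \<bar>B1\<bar>) * \<bar>B2\<bar> + \<bar>g x\<bar> * \<bar>B1\<bar>"
  show ?thesis unfolding pointwise_lipschitz_def
  proof (intro exI conjI ballI)
    fix y assume y: "y \<in> S \<inter> (T1 \<inter> T2 \<inter> ball x 1)"
    have f: "\<bar>f y - f x\<bar> \<le> \<bar>B1\<bar> * \<bar>y - x\<bar>" and g: "\<bar>g y - g x\<bar> \<le> \<bar>B2\<bar> * \<bar>y - x\<bar>"
      using 1 2 y by (auto intro: order_trans[OF _ mult_right_mono[OF abs_ge_self]])
    have "\<bar>y - x\<bar> \<le> 1" using y by (auto simp: dist_real_def)
    then have "\<bar>f y\<bar> \<le> \<bar>f x\<bar> + \<bar>B1\<bar>"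
      using f mult_left_mono[of "\<bar>y - x\<bar>" 1 "\<bar>B1\<bar>"] by linarith
    have "\<bar>f y * g y - f x * g x\<bar> = \<bar>f y * (g y - g x) + g x * (f y - f x)\<bar>"
      by (simp add: algebra_simps)
    also have "\<dots> \<le> \<bar>f y\<bar> * \<bar>g y - g x\<bar> + \<bar>g x\<bar> * \<bar>f y - f x\<bar>"
      by (metis abs_mult abs_triangle_ineq)
    also have "\<dots> \<le> (\<bar>f x\<bar> + \<bar>B1\<bar>) * (\<bar>B2\<bar> * \<bar>y - x\<bar>) + \<bar>g x\<bar> * (\<bar>B1\<bar> * \<bar>y - x\<bar>)"
      using \<open>\<bar>f y\<bar> \<le> \<bar>f x\<bar> + \<bar>B1\<bar>\<close> f g by (intro add_mono mult_mono mult_left_mono) auto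
    also have "\<dots> = B * \<bar>y - x\<bar>" by (simp add: B_def algebra_simps)
    finally show "\<bar>f y * g y - f x * g x\<bar> \<le> B * \<bar>y - x\<bar>" .
  qed (use 1 2 in auto)
qed

lemma pointwise_lipschitz_divide_const:
  "pointwise_lipschitz f S x \<Longrightarrow> pointwise_lipschitz (\<lambda>y. f y / c) S x"
  using pointwise_lipschitz_mult[OF _ pointwise_lipschitz_const, of f S x "1 / c"] by simp

lemma pointwise_lipschitz_has_real_derivative:
  assumes "(f has_real_derivative d) (at x)"
  shows "pointwise_lipschitz f S x"
proof -
  have "((\<lambda>y. (f y - f x) / (y - x)) \<longlongrightarrow> d) (at x)"
    using assms has_field_derivative_iff by blast
  then have "eventually (\<lambda>y. dist ((f y - f x) / (y - x)) d < 1) (at x)"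
    by (rule tendstoD) simp
  then obtain r where r: "r > 0"
    "\<And>y. 0 < dist y x \<Longrightarrow> dist y x < r \<Longrightarrow> dist ((f y - f x) / (y - x)) d < 1"
    unfolding eventually_at by auto
  show ?thesis unfolding pointwise_lipschitz_def
  proof (intro exI conjI ballI)
    fix y assume y: "y \<in> S \<inter> ball x r"
    show "\<bar>f y - f x\<bar> \<le> (\<bar>d\<bar> + 1) * \<bar>y - x\<bar>"
    proof (cases "y = x")
      case False
      then have "\<bar>(f y - f x) / (y - x) - d\<bar> < 1"
        using r(2)[of y] y by (auto simp: dist_real_def dist_commute)
      then have "\<bar>(f y - f x) / (y - x)\<bar> \<le> \<bar>d\<bar> + 1" by linarith
      then show ?thesis using False by (simp add: abs_divide divide_le_eq)
    qed simp
  qed (use r in auto)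
qed

lemma pointwise_lipschitz_imp_continuous_on:
  assumes "\<forall>x\<in>S. pointwise_lipschitz f S x"
  shows "continuous_on S f"
  unfolding continuous_on_iff
proof (intro ballI allI impI)
  fix x e assume x: "x \<in> S" and e: "(0::real) < e"
  obtain T B where T: "open T" "x \<in> T" "\<forall>y\<in>S \<inter> T. \<bar>f y - f x\<bar> \<le> B * \<bar>y - x\<bar>"
    using assms x unfolding pointwise_lipschitz_def by blast
  obtain r where r: "r > 0" "ball x r \<subseteq> T" using T open_contains_ball by blast
  define d where "d = min r (e / (\<bar>B\<bar> + 1))"
  show "\<exists>d>0. \<forall>y\<in>S. dist y x < d \<longrightarrow> dist (f y) (f x) < e"
  proof (intro exI conjI ballI impI)
    fix y assume y: "y \<in> S" "dist y x < d"
    then have "\<bar>f y - f x\<bar> \<le> B * \<bar>y - x\<bar>" using T r by (auto simp: d_def dist_commute)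
    also have "\<dots> \<le> \<bar>B\<bar> * d"
      using y by (intro mult_mono) (auto simp: dist_real_def)
    also have "\<dots> \<le> \<bar>B\<bar> * (e / (\<bar>B\<bar> + 1))" by (intro mult_left_mono) (auto simp: d_def)
    also have "\<dots> < e" using e by (simp add: field_simps)
    finally show "dist (f y) (f x) < e" by (simp add: dist_real_def)
  qed (use r e in \<open>simp add: d_def\<close>)
qed

lemma last_crossing:
  fixes g :: "real \<Rightarrow> real"
  assumes ab: "a \<le> b" and cont: "continuous_on {a..b} g" and y: "g a < y" "y < g b"
  obtains t where "t \<in> {a..<b}" "g t = y" "\<And>s. s \<in> {t<..b} \<Longrightarrow> g s > y"
proof -
  define L where "L = {s \<in> {a..b}. g s \<le> y}"
  have "closed L"
  proof -
    have "L = {a..b} \<inter> g -` {..y}" by (auto simp: L_def)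
    then show ?thesis using continuous_closed_preimage[OF cont] by auto
  qed
  have "a \<in> L" using y ab by (auto simp: L_def)
  have bdd: "bdd_above L" by (auto simp: L_def bdd_above_def)
  define t where "t = Sup L"
  have "t \<in> L" unfolding t_def using closed_contains_Sup[OF _ bdd \<open>closed L\<close>] \<open>a \<in> L\<close> by blast
  then have tab: "a \<le> t" "t \<le> b" and gt: "g t \<le> y" by (auto simp: L_def)
  have tb: "t < b" using gt y tab by (cases "t = b") auto
  have after: "g s > y" if "s \<in> {t<..b}" for s
  proof (rule ccontr)
    assume "\<not> g s > y"
    then have "s \<in> L" using that tab by (auto simp: L_def)
    then show False using cSup_upper[OF _ bdd, of s] that by (auto simp: t_def)
  qed
  have "g t = y"
  proof (rule ccontr)
    assume "g t \<noteq> y"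
    with gt have "g t < y" by simp
    moreover have "continuous (at t within {a..b}) g"
      using cont tab by (simp add: continuous_on_eq_continuous_within)
    ultimately have "eventually (\<lambda>s. g s < y) (at t within {a..b})"
      unfolding continuous_within using order_tendstoD(2) by blast
    then obtain d where d: "d > 0"
      "\<And>s. s \<in> {a..b} \<Longrightarrow> 0 < dist s t \<Longrightarrow> dist s t < d \<Longrightarrow> g s < y"
      unfolding eventually_at by auto
    define s where "s = min b (t + d/2)"
    have "s \<in> {t<..b}" using d tb by (auto simp: s_def)
    moreover have "g s < y" using d tab tb by (intro d(2)) (auto simp: s_def dist_real_def)
    ultimately show False using after by (meson order_less_asym)
  qed
  then show ?thesis using that tab tb after by auto
qed

text \<open>If \<open>f b > f a\<close>, tilt \<open>f\<close> by a small slope.  The tilted function maps the null set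
  \<open>N \<inter> {a..b}\<close> to a null set, so it crosses some level strictly between its values at \<open>a\<close>
  and \<open>b\<close> for the last time outside \<open>N\<close>, where the slope hypothesis is violated.\<close>

lemma le_if_right_slopes_small:
  fixes f :: "real \<Rightarrow> real"
  assumes ab: "a \<le> b" and cont: "continuous_on {a..b} f" and N: "negligible N"
    and lip: "\<And>x. x \<in> N \<inter> {a..b} \<Longrightarrow> pointwise_lipschitz f (N \<inter> {a..b}) x"
    and slope: "\<And>t e. t \<in> {a..<b} - N \<Longrightarrow> e > 0 \<Longrightarrow> \<exists>s\<in>{t<..b}. f s - f t \<le> e * (s - t)"
  shows "f b \<le> f a"
proof (rule ccontr)
  assume "\<not> f b \<le> f a"
  then have fab: "f a < f b" by simp
  with ab have "a < b" by (cases "a = b") auto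
  define e where "e = (f b - f a) / (2 * (b - a))"
  have e: "e > 0" using fab \<open>a < b\<close> by (simp add: e_def)
  define g where "g s = f s - e * (s - a)" for s
  have gab: "g a < g b"
  proof -
    have "e * (b - a) = (f b - f a) / 2" using \<open>a < b\<close> by (simp add: e_def field_simps)
    then show ?thesis using fab by (simp add: g_def)
  qed
  let ?S = "N \<inter> {a..b}"
  have "negligible (g ` ?S)"
  proof (rule negligible_locally_Lipschitz_image)
    fix x assume x: "x \<in> ?S"
    then have "pointwise_lipschitz g ?S x" unfolding g_def
      by (intro pointwise_lipschitz_diff pointwise_lipschitz_mult lip
          pointwise_lipschitz_const pointwise_lipschitz_ident)
    then show "\<exists>T B. open T \<and> x \<in> T \<and> (\<forall>y\<in>?S \<inter> T. norm (g y - g x) \<le> B * norm (y - x))"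
      unfolding pointwise_lipschitz_def real_norm_def .
  qed (use N negligible_Int in auto)
  moreover have "\<not> negligible {g a<..<g b}"
    using gab negligible_interval(2)[of "g a" "g b"] by (simp add: box_real)
  ultimately have "\<not> {g a<..<g b} \<subseteq> g ` ?S" using negligible_subset by blast
  then obtain y where y: "g a < y" "y < g b" "y \<notin> g ` ?S" by (auto simp: subset_eq)
  have "continuous_on {a..b} g" unfolding g_def by (intro continuous_intros cont)
  then obtain t where t: "t \<in> {a..<b}" "g t = y" "\<And>s. s \<in> {t<..b} \<Longrightarrow> g s > y"
    using last_crossing ab y(1,2) by blast
  then have "t \<notin> N" using y(3) by force
  then obtain s where s: "s \<in> {t<..b}" "f s - f t \<le> e * (s - t)"
    using slope[of t e] e t by auto
  then have "g s \<le> g t" by (simp add: g_def algebra_simps)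
  then show False using t(2) t(3)[OF s(1)] by simp
qed

definition right_dini_le :: "(real \<Rightarrow> real) \<Rightarrow> real \<Rightarrow> real set \<Rightarrow> real \<Rightarrow> bool" where
  "right_dini_le \<phi> t S d \<longleftrightarrow>
     (\<forall>e>0. eventually (\<lambda>s. \<phi> s - \<phi> t \<le> (d + e) * (s - t)) (at t within S))"

lemma eventually_mem_at_within: "eventually (\<lambda>y. y \<in> S) (at t within S)"
  unfolding eventually_at_filter by simp

lemma right_dini_le_if_has_real_derivative:
  assumes der: "(\<phi> has_real_derivative d) (at t within S)" and S: "S \<subseteq> {t<..}"
  shows "right_dini_le \<phi> t S d"
  unfolding right_dini_le_def
proof (intro allI impI)
  fix e :: real assume "e > 0"
  have "((\<lambda>y. (\<phi> y - \<phi> t) / (y - t)) \<longlongrightarrow> d) (at t within S)"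
    using der has_field_derivative_iff by blast
  then have "eventually (\<lambda>y. dist ((\<phi> y - \<phi> t) / (y - t)) d < e) (at t within S)"
    using \<open>e > 0\<close> by (rule tendstoD)
  then show "eventually (\<lambda>s. \<phi> s - \<phi> t \<le> (d + e) * (s - t)) (at t within S)"
    using eventually_mem_at_within[of S t]
  proof eventually_elim
    case (elim y)
    then have "y - t > 0" "(\<phi> y - \<phi> t) / (y - t) < d + e"
      using S by (auto simp: dist_real_def)
    then show ?case by (simp add: divide_less_eq less_imp_le)
  qed
qed

lemma right_dini_le_add:
  assumes "right_dini_le \<phi> t S d1" "right_dini_le \<psi> t S d2"
  shows "right_dini_le (\<lambda>s. \<phi> s + \<psi> s) t S (d1 + d2)"
  unfolding right_dini_le_def
proof (intro allI impI)
  fix e :: real assume "e > 0"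
  then have "eventually (\<lambda>s. \<phi> s - \<phi> t \<le> (d1 + e/2) * (s - t)) (at t within S)"
    "eventually (\<lambda>s. \<psi> s - \<psi> t \<le> (d2 + e/2) * (s - t)) (at t within S)"
    using assms unfolding right_dini_le_def by simp_all
  then show "eventually (\<lambda>s. \<phi> s + \<psi> s - (\<phi> t + \<psi> t) \<le> (d1 + d2 + e) * (s - t)) (at t within S)"
  proof eventually_elim
    case (elim s)
    have "(d1 + e/2) * (s - t) + (d2 + e/2) * (s - t) = (d1 + d2 + e) * (s - t)"
      by (simp add: algebra_simps)
    then show ?case using elim by linarith
  qed
qed

lemma right_dini_le_mono:
  assumes "right_dini_le \<phi> t S d" "d \<le> d'" "S \<subseteq> {t<..}"
  shows "right_dini_le \<phi> t S d'"
  unfolding right_dini_le_def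
proof (intro allI impI)
  fix e :: real assume "e > 0"
  then have "eventually (\<lambda>s. \<phi> s - \<phi> t \<le> (d + e) * (s - t)) (at t within S)"
    using assms(1) unfolding right_dini_le_def by simp
  then show "eventually (\<lambda>s. \<phi> s - \<phi> t \<le> (d' + e) * (s - t)) (at t within S)"
    using eventually_mem_at_within[of S t]
  proof eventually_elim
    case (elim s)
    then have "(d + e) * (s - t) \<le> (d' + e) * (s - t)"
      using assms(2,3) by (intro mult_right_mono) auto
    then show ?case using elim by linarith
  qed
qed

lemma right_dini_le_witness:
  assumes "right_dini_le f \<tau> (I \<inter> {\<tau><..}) d" "e > 0" "\<tau> < t" "{\<tau>..t} \<subseteq> I"
  shows "\<exists>s\<in>{\<tau><..t}. f s - f \<tau> \<le> (d + e) * (s - \<tau>)"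
proof -
  have "eventually (\<lambda>s. f s - f \<tau> \<le> (d + e) * (s - \<tau>)) (at \<tau> within I \<inter> {\<tau><..})"
    using assms(1,2) unfolding right_dini_le_def by blast
  then obtain r where r: "r > 0" "\<And>s. s \<in> I \<inter> {\<tau><..} \<Longrightarrow> 0 < dist s \<tau> \<Longrightarrow> dist s \<tau> < r
      \<Longrightarrow> f s - f \<tau> \<le> (d + e) * (s - \<tau>)"
    unfolding eventually_at by auto
  define s where "s = min t (\<tau> + r/2)"
  have "s \<in> {\<tau><..t}" using r assms(3) by (auto simp: s_def)
  moreover have "f s - f \<tau> \<le> (d + e) * (s - \<tau>)"
    using r assms(3,4) \<open>s \<in> {\<tau><..t}\<close> by (intro r(2)) (auto simp: s_def dist_real_def)
  ultimately show ?thesis by blast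
qed

lemma right_dini_le_cmult:
  assumes "right_dini_le \<phi> t S d" "c \<ge> 0" "S \<subseteq> {t<..}"
  shows "right_dini_le (\<lambda>s. c * \<phi> s) t S (c * d)"
proof (cases "c = 0")
  case True
  then show ?thesis
    using eventually_mem_at_within[of S t] assms(3)
    unfolding right_dini_le_def by (auto elim!: eventually_mono)
next
  case False
  with assms(2) have c: "c > 0" by simp
  show ?thesis unfolding right_dini_le_def
  proof (intro allI impI)
    fix e :: real assume "e > 0"
    with c assms(1) have "eventually (\<lambda>s. \<phi> s - \<phi> t \<le> (d + e / c) * (s - t)) (at t within S)"
      unfolding right_dini_le_def by simp
    then show "eventually (\<lambda>s. c * \<phi> s - c * \<phi> t \<le> (c * d + e) * (s - t)) (at t within S)"
    proof eventually_elim
      case (elim s)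
      then have "c * (\<phi> s - \<phi> t) \<le> c * ((d + e / c) * (s - t))" using c by simp
      also have "\<dots> = (c * d + e) * (s - t)" using c by (simp add: field_simps)
      finally show ?case by (simp add: algebra_simps)
    qed
  qed
qed

lemma right_dini_le_max0:
  assumes der: "(\<psi> has_real_derivative d) (at t within S)" and S: "S \<subseteq> {t<..}"
    and nonneg: "\<psi> t \<ge> 0 \<Longrightarrow> d \<le> D" and nonpos: "\<psi> t \<le> 0 \<Longrightarrow> 0 \<le> D"
  shows "right_dini_le (\<lambda>s. max 0 (\<psi> s)) t S D"
  unfolding right_dini_le_def
proof (intro allI impI)
  fix e :: real assume e: "e > 0"
  have ev: "eventually (\<lambda>s. \<psi> s - \<psi> t \<le> (d + e) * (s - t)) (at t within S)"
    using right_dini_le_if_has_real_derivative[OF der S] e unfolding right_dini_le_def by simp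
  have lim: "(\<psi> \<longlongrightarrow> \<psi> t) (at t within S)"
    using DERIV_continuous[OF der] continuous_within by blast
  consider "\<psi> t > 0" | "\<psi> t = 0" | "\<psi> t < 0" by linarith
  then show "eventually (\<lambda>s. max 0 (\<psi> s) - max 0 (\<psi> t) \<le> (D + e) * (s - t)) (at t within S)"
  proof cases
    case 1
    from ev order_tendstoD(1)[OF lim 1] eventually_mem_at_within[of S t] show ?thesis
    proof eventually_elim
      case (elim s)
      then have "(d + e) * (s - t) \<le> (D + e) * (s - t)"
        using 1 nonneg S by (intro mult_right_mono) auto
      then show ?case using elim 1 by simp
    qed
  next
    case 2
    from ev eventually_mem_at_within[of S t] show ?thesis
    proof eventually_elim
      case (elim s)
      then have "s - t > 0" using S by auto
      then have "(d + e) * (s - t) \<le> (D + e) * (s - t)" "0 \<le> (D + e) * (s - t)"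
        using 2 nonneg nonpos e by (auto intro: mult_right_mono)
      then show ?case using elim 2 by auto
    qed
  next
    case 3
    from order_tendstoD(2)[OF lim 3] eventually_mem_at_within[of S t] show ?thesis
    proof eventually_elim
      case (elim s) then show ?case using 3 nonpos e S by auto
    qed
  qed
qed

lemma exp_weighted_increment_le:
  fixes C e f0 f1 s \<tau> :: real
  assumes step: "f1 - f0 \<le> (C * f0 + e) * (s - \<tau>)" and f0: "f0 \<ge> 0"
  shows "exp (- C * s) * f1 - exp (- C * \<tau>) * f0 \<le> exp (- C * s) * e * (s - \<tau>)"
proof -
  have "exp (- C * s) * (1 + C * (s - \<tau>)) \<le> exp (- C * s) * exp (C * (s - \<tau>))"
    by (intro mult_left_mono exp_ge_add_one_self) simp
  also have "\<dots> = exp (- C * \<tau>)" by (simp add: exp_add[symmetric] algebra_simps)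
  finally have weight: "exp (- C * s) * (1 + C * (s - \<tau>)) \<le> exp (- C * \<tau>)" .
  have "exp (- C * s) * f1 \<le> exp (- C * s) * (f0 + (C * f0 + e) * (s - \<tau>))"
    using step by (intro mult_left_mono) auto
  also have "\<dots> = f0 * (exp (- C * s) * (1 + C * (s - \<tau>))) + exp (- C * s) * e * (s - \<tau>)"
    by (simp add: algebra_simps)
  also have "\<dots> \<le> f0 * exp (- C * \<tau>) + exp (- C * s) * e * (s - \<tau>)"
    using weight f0 by (intro add_right_mono mult_left_mono)
  finally show ?thesis by (simp add: algebra_simps)
qed

lemma exp_weighted_right_slope:
  assumes dini: "right_dini_le f \<tau> (I \<inter> {\<tau><..}) (C * f \<tau>)" and "f \<tau> \<ge> 0"
    and \<tau>: "0 \<le> \<tau>" "\<tau> < t" "{\<tau>..t} \<subseteq> I" and e: "e > 0"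
  shows "\<exists>s\<in>{\<tau><..t}. exp (- C * s) * f s - exp (- C * \<tau>) * f \<tau> \<le> e * (s - \<tau>)"
proof -
  define e' where "e' = e * exp (- \<bar>C\<bar> * t)"
  have "e' > 0" using e by (simp add: e'_def)
  then obtain s where s: "s \<in> {\<tau><..t}" "f s - f \<tau> \<le> (C * f \<tau> + e') * (s - \<tau>)"
    using right_dini_le_witness[OF dini _ \<tau>(2,3)] by blast
  from s(2) have "exp (- C * s) * f s - exp (- C * \<tau>) * f \<tau> \<le> exp (- C * s) * e' * (s - \<tau>)"
    using \<open>f \<tau> \<ge> 0\<close> by (rule exp_weighted_increment_le)
  also have "\<dots> \<le> e * (s - \<tau>)"
  proof -
    have "- C * s \<le> \<bar>C\<bar> * s" using s \<tau> by (intro mult_right_mono) auto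
    also have "\<dots> \<le> \<bar>C\<bar> * t" using s by (intro mult_left_mono) auto
    finally have "exp (- C * s) * exp (- \<bar>C\<bar> * t) \<le> 1" by (simp add: mult_exp_exp)
    then have "exp (- C * s) * e' \<le> e" using e by (simp add: e'_def mult.left_commute)
    then show ?thesis using s by (intro mult_right_mono) auto
  qed
  finally show ?thesis using s by auto
qed

lemma gronwall_right_dini:
  fixes f :: "real \<Rightarrow> real"
  assumes I: "is_interval I" "0 \<in> I" "I \<subseteq> {0..}"
    and lip: "\<And>x. x \<in> I \<Longrightarrow> pointwise_lipschitz f I x"
    and nonneg: "\<And>t. t \<in> I \<Longrightarrow> f t \<ge> 0" and N: "negligible N"
    and dini: "\<And>t. t \<in> I - N \<Longrightarrow> right_dini_le f t (I \<inter> {t<..}) (C * f t)"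
    and t: "t \<in> I"
  shows "f t \<le> f 0 * exp (C * t)"
proof -
  have t0: "t \<ge> 0" using I t by auto
  have sub: "{0..t} \<subseteq> I" using mem_is_interval_1_I[OF I(1,2) t] by auto
  define g where "g s = exp (- C * s) * f s" for s
  have "g t \<le> g 0"
  proof (rule le_if_right_slopes_small[OF t0 _ N])
    have "continuous_on {0..t} f"
      using pointwise_lipschitz_imp_continuous_on[of I f] lip continuous_on_subset sub by blast
    then show "continuous_on {0..t} g" unfolding g_def by (intro continuous_intros)
  next
    fix x assume x: "x \<in> N \<inter> {0..t}"
    have "((\<lambda>s. exp (- C * s)) has_real_derivative exp (- C * x) * (- C)) (at x)"
      by (auto intro!: derivative_eq_intros)
    moreover have "x \<in> I" using x sub by auto
    then have "pointwise_lipschitz f (N \<inter> {0..t}) x"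
      using lip sub by (blast intro: pointwise_lipschitz_subset)
    ultimately show "pointwise_lipschitz g (N \<inter> {0..t}) x"
      unfolding g_def by (rule pointwise_lipschitz_mult[OF pointwise_lipschitz_has_real_derivative])
  next
    fix \<tau> e assume \<tau>: "\<tau> \<in> {0..<t} - N" and "(e::real) > 0"
    then have "\<tau> \<in> I - N" "\<tau> \<ge> 0" "\<tau> < t" "{\<tau>..t} \<subseteq> I" using sub by auto
    then show "\<exists>s\<in>{\<tau><..t}. g s - g \<tau> \<le> e * (s - \<tau>)"
      unfolding g_def using nonneg \<open>e > 0\<close> by (intro exp_weighted_right_slope[OF dini]) auto
  qed
  then have "exp (- C * t) * f t \<le> f 0" by (simp add: g_def)
  then show ?thesis by (simp add: exp_minus field_simps)
qed

section \<open>Filippov solutions\<close>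

lemma has_real_derivative_vec_nth:
  "(z has_vector_derivative v) F \<Longrightarrow> ((\<lambda>s. (z s :: real^'n) $ i) has_real_derivative v $ i) F"
  using bounded_linear.has_vector_derivative[OF bounded_linear_vec_nth, of z v F i]
  by (simp add: has_real_derivative_iff_has_vector_derivative)

lemma pointwise_lipschitz_vec_nth:
  assumes "\<forall>t\<in>I. \<exists>\<delta>>0. \<exists>L. L-lipschitz_on (cball t \<delta> \<inter> I) z" "t \<in> I"
  shows "pointwise_lipschitz (\<lambda>s. (z s :: real^'n) $ i) I t"
proof -
  obtain \<delta> L where d: "\<delta> > 0" "L-lipschitz_on (cball t \<delta> \<inter> I) z" using assms by blast
  show ?thesis unfolding pointwise_lipschitz_def
  proof (intro exI conjI ballI)
    fix y assume y: "y \<in> I \<inter> ball t \<delta>"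
    have "\<bar>z y $ i - z t $ i\<bar> \<le> dist (z y) (z t)"
      using component_le_norm_cart[of "z y - z t" i] by (simp add: dist_norm)
    also have "\<dots> \<le> L * dist y t"
      by (rule lipschitz_onD[OF d(2)]) (use y d assms(2) in auto)
    finally show "\<bar>z y $ i - z t $ i\<bar> \<le> L * \<bar>y - t\<bar>" by (simp add: dist_real_def)
  qed (use d in auto)
qed

text \<open>By continuity of \<open>\<psi>\<close>, the closed convex half-space \<open>c * u $ i \<le> \<psi> z + \<eta>\<close> contains
  the values of \<open>X\<close> near \<open>z\<close>, hence their closed convex hull.\<close>

lemma filippov_set_component_le:
  fixes X :: "real^4 \<Rightarrow> real^4" and \<psi> :: "real^4 \<Rightarrow> real"
  assumes v: "v \<in> filippov_set X D z" and cont: "continuous (at z within D) \<psi>"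
    and bound: "\<And>w. w \<in> D \<Longrightarrow> c * X w $ i \<le> \<psi> w"
  shows "c * v $ i \<le> \<psi> z"
proof (rule field_le_epsilon)
  fix \<eta> :: real assume "\<eta> > 0"
  with cont have "eventually (\<lambda>w. dist (\<psi> w) (\<psi> z) < \<eta>) (at z within D)"
    unfolding continuous_within by (rule tendstoD)
  then obtain r where r: "r > 0"
    "\<And>w. w \<in> D \<Longrightarrow> 0 < dist w z \<Longrightarrow> dist w z < r \<Longrightarrow> dist (\<psi> w) (\<psi> z) < \<eta>"
    unfolding eventually_at by auto
  define H where "H = {u::real^4. c * u $ i \<le> \<psi> z + \<eta>}"
  have "v \<in> closure (convex hull (X ` ((cball z (r/2) \<inter> D) - {})))"
  proof -
    have "r/2 \<in> {0<..}" "{} \<in> null_sets lebesgue" using r by auto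
    then show ?thesis using v unfolding filippov_set_def by blast
  qed
  moreover have "closure (convex hull (X ` ((cball z (r/2) \<inter> D) - {}))) \<subseteq> H"
  proof (intro closure_minimal hull_minimal)
    show "X ` (cball z (r / 2) \<inter> D - {}) \<subseteq> H"
    proof
      fix u assume "u \<in> X ` (cball z (r / 2) \<inter> D - {})"
      then obtain w where w: "w \<in> D" "dist z w \<le> r/2" "u = X w" by auto
      have "\<psi> w \<le> \<psi> z + \<eta>"
      proof (cases "w = z")
        case False
        then have "dist (\<psi> w) (\<psi> z) < \<eta>" using r w by (intro r(2)) (auto simp: dist_commute)
        then show ?thesis by (simp add: dist_real_def)
      qed (use \<open>\<eta> > 0\<close> in simp)
      then show "u \<in> H" using bound[OF w(1)] w(3) by (simp add: H_def)
    qed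
    have "H = {u. inner (axis i c) u \<le> \<psi> z + \<eta>}" by (simp add: H_def inner_axis')
    then show "convex H" by (simp add: convex_halfspace_le)
    show "closed H" unfolding H_def
      by (rule closed_Collect_le) (intro continuous_intros)+
  qed
  ultimately show "c * v $ i \<le> \<psi> z + \<eta>" by (auto simp: H_def)
qed

lemma filippov_solution_velocities:
  assumes "filippov_solution X D z I"
  obtains N where "N \<in> null_sets lebesgue"
    "\<And>t. t \<in> I - N \<Longrightarrow> \<exists>v\<in>filippov_set X D (z t).
       \<forall>i. ((\<lambda>s. z s $ i) has_real_derivative v $ i) (at t within I \<inter> {t<..})"
proof -
  obtain N where "N \<in> null_sets lebesgue"
    and "\<forall>t\<in>I - N. \<exists>v. (z has_vector_derivative v) (at t within I) \<and> v \<in> filippov_set X D (z t)"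
    using assms unfolding filippov_solution_def by blast
  then show ?thesis
    using that has_real_derivative_vec_nth has_vector_derivative_within_subset[of z _ t I "I \<inter> {t<..}" for t]
    by (metis inf_le1)
qed

section \<open>The closed-loop model\<close>

lemma vector_4:
  "(vector [a, b, c, d] :: ('x::zero)^4) $ 1 = a"
  "(vector [a, b, c, d] :: ('x::zero)^4) $ 2 = b"
  "(vector [a, b, c, d] :: ('x::zero)^4) $ 3 = c"
  "(vector [a, b, c, d] :: ('x::zero)^4) $ 4 = d"
  unfolding vector_def by simp_all

lemma Dprime_nonneg: "w \<in> Dprime \<Longrightarrow> w $ i \<ge> 0"
  by (simp add: Dprime_def)

locale sit_feedback =
  fixes \<beta>E \<nu>E \<delta>E \<delta>M \<delta>F \<delta>s K \<nu> \<gamma>s k :: real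
  assumes pos: "\<beta>E > 0" "\<nu>E > 0" "\<delta>E > 0" "\<delta>M > 0" "\<delta>F > 0" "\<delta>s > 0" "K > 0"
    and nu_bounds: "0 < \<nu>" "\<nu> < 1"
    and gam: "0 < \<gamma>s" "\<gamma>s \<le> 1"
    and R0: "R0 \<beta>E \<nu>E \<delta>E \<delta>F \<nu> > 1"
    and k_lo: "(\<beta>E * \<nu> * \<nu>E - (\<nu>E + \<delta>E) * \<delta>F)
                / (\<beta>E * \<nu> * \<nu>E - (1 - \<gamma>s) * (\<nu>E + \<delta>E) * \<delta>F) * \<delta>s < k"
    and k_hi: "k < \<delta>s"
begin

definition "A = \<nu>E + \<delta>E"
definition "P = \<beta>E * \<nu> * \<nu>E - \<delta>F * A"
definition "kap = kappa_bar \<beta>E \<nu>E \<delta>E \<delta>F \<nu> \<gamma>s"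
definition "X = closed_loop \<beta>E \<nu>E \<delta>E \<delta>M \<delta>F \<delta>s K \<nu> \<gamma>s k"
definition "MM = Mset \<beta>E \<nu>E \<delta>E \<delta>M K \<nu> kap"

definition "g1 w = A * w $ 1 - \<beta>E * w $ 3 * (1 - w $ 1 / K)" for w :: "real^4"
definition "g2 w = kap * w $ 4 - w $ 2" for w :: "real^4"
definition "g3 w = \<delta>M * w $ 2 - (1 - \<nu>) * \<nu>E * w $ 1" for w :: "real^4"

text \<open>Upper envelope of the Filippov regularisation of \<open>M / (M + \<gamma>\<^sub>s M\<^sub>s)\<close>: at
  \<open>M = M\<^sub>s = 0\<close> the closed loop evaluates \<open>0 / 0 = 0\<close>, but nearby values approach \<open>1\<close>.\<close>
definition "hh w = (if w $ 2 + \<gamma>s * w $ 4 = 0 then 1 else w $ 2 / (w $ 2 + \<gamma>s * w $ 4))"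
  for w :: "real^4"

lemma A_pos: "A > 0"
  using pos by (simp add: A_def)

lemma P_pos: "P > 0"
proof -
  have "\<delta>F * A > 0" using pos A_pos by simp
  moreover have "\<beta>E * \<nu> * \<nu>E / (\<delta>F * A) > 1" using R0 by (simp add: R0_def A_def)
  ultimately show ?thesis by (simp add: P_def divide_less_eq less_divide_eq)
qed

lemma kap_eq: "kap = \<gamma>s * \<delta>F * A / P"
  by (simp add: kap_def kappa_bar_def P_def A_def)

lemma kap_pos: "kap > 0"
  using gam pos A_pos P_pos by (simp add: kap_eq)

lemma kap_mult_P: "kap * P = \<gamma>s * \<delta>F * A"
  using P_pos by (simp add: kap_eq)

lemma release_rate_gt: "k * (1 + kap) > \<delta>s"
proof -
  have den: "\<beta>E * \<nu> * \<nu>E - (1 - \<gamma>s) * (\<nu>E + \<delta>E) * \<delta>F = P + \<gamma>s * \<delta>F * A"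
    by (simp add: P_def A_def algebra_simps)
  have num: "\<beta>E * \<nu> * \<nu>E - (\<nu>E + \<delta>E) * \<delta>F = P" by (simp add: P_def A_def algebra_simps)
  have "P + \<gamma>s * \<delta>F * A > 0" using P_pos gam pos A_pos by (simp add: add_pos_pos)
  moreover have "P / (P + \<gamma>s * \<delta>F * A) * \<delta>s < k" using k_lo den num by simp
  ultimately have "P * \<delta>s < k * (P + \<gamma>s * \<delta>F * A)" by (simp add: field_simps)
  also have "\<dots> = P * (k * (1 + kap))" using kap_mult_P by (simp add: algebra_simps)
  finally show ?thesis using P_pos by simp
qed

lemma k_pos: "k > 0"
proof -
  have "k * (1 + kap) > 0" using release_rate_gt pos by linarith
  then show ?thesis using kap_pos by (simp add: zero_less_mult_iff)
qed

lemma X_components: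
  "X w $ 1 = \<beta>E * w $ 3 * (1 - w $ 1 / K) - A * w $ 1"
  "X w $ 2 = (1 - \<nu>) * \<nu>E * w $ 1 - \<delta>M * w $ 2"
  "X w $ 3 = \<nu> * \<nu>E * w $ 1 * (w $ 2 / (w $ 2 + \<gamma>s * w $ 4)) - \<delta>F * w $ 3"
  "X w $ 4 = k * (w $ 2 + w $ 4) - \<delta>s * w $ 4"
  by (simp_all add: X_def closed_loop_def Let_def vector_4 A_def)

lemma MM_iff: "w \<in> MM \<longleftrightarrow> w \<in> Dprime \<and> g1 w \<ge> 0 \<and> g2 w \<ge> 0 \<and> g3 w \<ge> 0"
  by (auto simp: MM_def Mset_def T1_def T2_def T3_def g1_def g2_def g3_def A_def kap_def)

lemma male_fraction_le_one:
  assumes "u \<in> Dprime"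
  shows "u $ 2 / (u $ 2 + \<gamma>s * u $ 4) \<le> 1"
proof -
  have "0 \<le> \<gamma>s * u $ 4" using gam Dprime_nonneg[OF assms] by simp
  then show ?thesis using Dprime_nonneg[OF assms, of 2]
    by (cases "u $ 2 + \<gamma>s * u $ 4 = 0") (auto simp: divide_le_eq_1)
qed

lemma filippov_components:
  assumes w: "w \<in> Dprime" and v: "v \<in> filippov_set X Dprime w"
  shows "v $ 1 = X w $ 1" "v $ 2 = X w $ 2" "v $ 4 = X w $ 4"
    "v $ 3 \<le> \<nu> * \<nu>E * w $ 1 * hh w - \<delta>F * w $ 3"
proof -
  have eq: "v $ i = X w $ i" if "continuous (at w within Dprime) (\<lambda>u. X u $ i)" for i
  proof -
    have "1 * v $ i \<le> X w $ i"
      by (rule filippov_set_component_le[OF v, where \<psi> = "\<lambda>u. X u $ i"]) (use that in auto)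
    moreover have "(-1) * v $ i \<le> - X w $ i"
      by (rule filippov_set_component_le[OF v, where \<psi> = "\<lambda>u. - X u $ i"])
        (use that in \<open>auto intro: continuous_intros\<close>)
    ultimately show ?thesis by simp
  qed
  show "v $ 1 = X w $ 1"
    by (rule eq) (simp only: X_components, intro continuous_intros, use pos in simp)
  show "v $ 2 = X w $ 2" "v $ 4 = X w $ 4"
    by (rule eq, simp only: X_components, intro continuous_intros)+
  show "v $ 3 \<le> \<nu> * \<nu>E * w $ 1 * hh w - \<delta>F * w $ 3"
  proof (cases "w $ 2 + \<gamma>s * w $ 4 = 0")
    case True
    have "1 * v $ 3 \<le> \<nu> * \<nu>E * w $ 1 - \<delta>F * w $ 3"
    proof (rule filippov_set_component_le[OF v, where \<psi> = "\<lambda>u. \<nu> * \<nu>E * u $ 1 - \<delta>F * u $ 3"])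
      fix u assume u: "u \<in> Dprime"
      have "\<nu> * \<nu>E * u $ 1 * (u $ 2 / (u $ 2 + \<gamma>s * u $ 4)) \<le> \<nu> * \<nu>E * u $ 1 * 1"
        using male_fraction_le_one[OF u] nu_bounds pos Dprime_nonneg[OF u, of 1]
        by (intro mult_left_mono) auto
      then show "1 * X u $ 3 \<le> \<nu> * \<nu>E * u $ 1 - \<delta>F * u $ 3" by (simp add: X_components)
    qed (intro continuous_intros)
    then show ?thesis using True by (simp add: hh_def)
  next
    case False
    have "1 * v $ 3 \<le> X w $ 3"
      by (rule filippov_set_component_le[OF v, where \<psi> = "\<lambda>u. X u $ 3"])
        (simp_all only: X_components, intro continuous_intros, use False in auto)
    then show ?thesis using False by (simp add: hh_def X_components)
  qed
qed

subsection \<open>Positive invariance of \<open>\<M>\<close>\<close>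

definition "c_viol = (\<beta>E * \<nu> * \<nu>E + P * (\<delta>M + 1)) / ((1 - \<nu>) * \<nu>E)"

lemma c_viol_nonneg: "c_viol \<ge> 0"
  using pos nu_bounds P_pos by (simp add: c_viol_def)

text \<open>The choice \<open>\<kappa> = \<overline>\<kappa>\<close> makes \<open>\<beta>\<^sub>E \<nu> \<nu>\<^sub>E E H - \<delta>\<^sub>F (\<nu>\<^sub>E + \<delta>\<^sub>E) E\<close>, the key term in the
  derivative of the \<open>T\<^sub>1\<close> constraint, vanish exactly on the boundary \<open>M = \<kappa> M\<^sub>s\<close> of \<open>T\<^sub>2\<close>.\<close>

lemma recruitment_excess_eq:
  fixes E M S :: real
  assumes "M + \<gamma>s * S \<noteq> 0"
  shows "\<beta>E * \<nu> * \<nu>E * (E * (M / (M + \<gamma>s * S))) - \<delta>F * A * E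
           = P * (E * (M - kap * S) / (M + \<gamma>s * S))"
proof -
  have "P * (M - kap * S) = P * M - (kap * P) * S" by (simp add: algebra_simps)
  also have "\<dots> = \<beta>E * \<nu> * \<nu>E * M - \<delta>F * A * (M + \<gamma>s * S)"
    unfolding kap_mult_P by (simp add: P_def algebra_simps)
  finally have "P * (M - kap * S) = \<beta>E * \<nu> * \<nu>E * M - \<delta>F * A * (M + \<gamma>s * S)" .
  moreover have "\<beta>E * \<nu> * \<nu>E * (E * (M / (M + \<gamma>s * S))) - \<delta>F * A * E
      = E * (\<beta>E * \<nu> * \<nu>E * M - \<delta>F * A * (M + \<gamma>s * S)) / (M + \<gamma>s * S)"
    using assms by (simp add: field_simps)
  ultimately show ?thesis by simp
qed

lemma egg_excess_fraction_le:
  fixes E M S :: real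
  assumes nn: "E \<ge> 0" "M \<ge> 0" "S \<ge> 0" and excess: "M - kap * S > 0"
  shows "(1 - \<nu>) * \<nu>E * (E * (M - kap * S) / (M + \<gamma>s * S))
           \<le> \<delta>M * (M - kap * S) + max 0 ((1 - \<nu>) * \<nu>E * E - \<delta>M * M)"
proof -
  define D where "D = M + \<gamma>s * S"
  define x where "x = M - kap * S"
  define m3 where "m3 = max 0 ((1 - \<nu>) * \<nu>E * E - \<delta>M * M)"
  have "x \<le> M" using kap_pos nn by (simp add: x_def)
  moreover have "\<gamma>s * S \<ge> 0" using nn gam by simp
  ultimately have D: "M \<le> D" "0 < D" "x \<le> D" using excess by (auto simp: D_def x_def)
  have "(1 - \<nu>) * \<nu>E * E * x \<le> (\<delta>M * M + m3) * x"
    using excess by (intro mult_right_mono) (auto simp: m3_def x_def)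
  also have "\<dots> = \<delta>M * M * x + m3 * x" by (simp add: algebra_simps)
  also have "\<dots> \<le> \<delta>M * D * x + m3 * D"
    using D excess pos by (intro add_mono mult_right_mono mult_left_mono) (auto simp: m3_def x_def)
  finally have "(1 - \<nu>) * \<nu>E * E * x \<le> (\<delta>M * x + m3) * D" by (simp add: algebra_simps)
  then have "(1 - \<nu>) * \<nu>E * (E * x / D) \<le> \<delta>M * x + m3"
    using D by (simp add: pos_divide_le_eq mult.assoc)
  then show ?thesis by (simp add: D_def x_def m3_def)
qed

lemma recruitment_excess_le:
  fixes E M S H :: real
  assumes nn: "E \<ge> 0" "M \<ge> 0" "S \<ge> 0"
    and H: "H = (if M + \<gamma>s * S = 0 then 1 else M / (M + \<gamma>s * S))"
  shows "\<beta>E * \<nu> * \<nu>E * (E * H) - \<delta>F * A * E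
           \<le> c_viol * (max 0 (M - kap * S) + max 0 ((1 - \<nu>) * \<nu>E * E - \<delta>M * M))"
proof -
  define q where "q = (1 - \<nu>) * \<nu>E"
  define m2 where "m2 = max 0 (M - kap * S)"
  define m3 where "m3 = max 0 ((1 - \<nu>) * \<nu>E * E - \<delta>M * M)"
  define c where "c = \<beta>E * \<nu> * \<nu>E + P * (\<delta>M + 1)"
  have q: "q > 0" using nu_bounds pos by (simp add: q_def)
  have m: "m2 \<ge> 0" "m3 \<ge> 0" by (auto simp: m2_def m3_def)
  have c: "\<beta>E * \<nu> * \<nu>E * m3 \<le> c * (m2 + m3)" "P * (\<delta>M * m2 + m3) \<le> c * (m2 + m3)"
    using m P_pos pos nu_bounds by (auto simp: c_def algebra_simps intro!: add_increasing)
  have "q * (\<beta>E * \<nu> * \<nu>E * (E * H) - \<delta>F * A * E) \<le> c * (m2 + m3)"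
  proof (cases "M + \<gamma>s * S = 0")
    case True
    moreover have "\<gamma>s * S \<ge> 0" using nn gam by simp
    ultimately have "M = 0" "H = 1" using nn H by auto
    then have "q * (\<beta>E * \<nu> * \<nu>E * (E * H) - \<delta>F * A * E) \<le> \<beta>E * \<nu> * \<nu>E * (q * E)"
      using q pos A_pos nn by (simp add: algebra_simps)
    also have "\<dots> \<le> \<beta>E * \<nu> * \<nu>E * m3"
      using \<open>M = 0\<close> pos nu_bounds by (intro mult_left_mono) (auto simp: m3_def q_def)
    finally show ?thesis using c(1) by linarith
  next
    case False
    then have excess: "\<beta>E * \<nu> * \<nu>E * (E * H) - \<delta>F * A * E
        = P * (E * (M - kap * S) / (M + \<gamma>s * S))"
      using recruitment_excess_eq H by simp
    show ?thesis
    proof (cases "M - kap * S > 0")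
      case True
      then have "P * (q * (E * (M - kap * S) / (M + \<gamma>s * S))) \<le> P * (\<delta>M * m2 + m3)"
        using egg_excess_fraction_le[OF nn True] P_pos
        by (intro mult_left_mono) (auto simp: q_def m2_def m3_def)
      then show ?thesis using excess c(2) by (simp add: mult.left_commute)
    next
      case False
      then have "E * (M - kap * S) / (M + \<gamma>s * S) \<le> 0"
        using nn gam by (simp add: divide_nonpos_nonneg mult_nonneg_nonpos)
      then have "(q * P) * (E * (M - kap * S) / (M + \<gamma>s * S)) \<le> 0"
        using q P_pos by (intro mult_nonneg_nonpos) auto
      then have "q * (P * (E * (M - kap * S) / (M + \<gamma>s * S))) \<le> 0"
        by (simp only: mult.assoc)
      moreover have "0 \<le> c * (m2 + m3)" using m P_pos pos nu_bounds by (simp add: c_def)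
      ultimately show ?thesis using excess by simp
    qed
  qed
  then have "\<beta>E * \<nu> * \<nu>E * (E * H) - \<delta>F * A * E \<le> c * (m2 + m3) / q"
    using q by (simp add: pos_le_divide_eq mult.commute)
  then show ?thesis by (simp add: c_viol_def c_def m2_def m3_def q_def)
qed

lemma T1_rate_bound:
  fixes E M F S v1 v3 H :: real
  assumes nn: "E \<ge> 0" "M \<ge> 0" "F \<ge> 0" "S \<ge> 0"
    and v1: "v1 = \<beta>E * F * (1 - E / K) - A * E"
    and v3: "v3 \<le> \<nu> * \<nu>E * E * H - \<delta>F * F"
    and H: "H = (if M + \<gamma>s * S = 0 then 1 else M / (M + \<gamma>s * S))"
    and g1: "A * E - \<beta>E * F * (1 - E / K) \<le> 0"
  shows "- (A * v1 - \<beta>E * (v3 * (1 - E / K) - F * v1 / K))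
           \<le> c_viol * (max 0 (M - kap * S) + max 0 ((1 - \<nu>) * \<nu>E * E - \<delta>M * M))"
proof -
  define u where "u = 1 - E / K"
  have "u > 0"
  proof (rule ccontr)
    assume "\<not> u > 0"
    then have "\<beta>E * F * u \<le> 0" using pos nn by (simp add: mult_nonneg_nonpos)
    moreover have "E > 0" using \<open>\<not> u > 0\<close> pos by (auto simp: u_def)
    then have "A * E > 0" using A_pos by simp
    ultimately show False using g1 by (simp add: u_def)
  qed
  have "u \<le> 1" using nn pos by (simp add: u_def)
  have "A * E \<le> \<beta>E * F * u" "v1 \<ge> 0" using g1 v1 by (simp_all add: u_def)
  have "H \<ge> 0" using H nn gam by auto
  have "- (A * v1 - \<beta>E * (v3 * (1 - E / K) - F * v1 / K)) = - A * v1 + \<beta>E * u * v3 - \<beta>E * F * v1 / K"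
    by (simp add: u_def algebra_simps)
  also have "\<dots> \<le> \<beta>E * u * v3"
  proof -
    have "A * v1 \<ge> 0" "\<beta>E * F * v1 / K \<ge> 0" using A_pos \<open>v1 \<ge> 0\<close> pos nn by simp_all
    then show ?thesis by linarith
  qed
  also have "\<dots> \<le> \<beta>E * u * (\<nu> * \<nu>E * E * H - \<delta>F * F)"
    using v3 pos \<open>u > 0\<close> by (intro mult_left_mono) auto
  also have "\<dots> = \<beta>E * \<nu> * \<nu>E * (E * H) * u - \<delta>F * (\<beta>E * F * u)" by (simp add: algebra_simps)
  also have "\<dots> \<le> \<beta>E * \<nu> * \<nu>E * (E * H) - \<delta>F * A * E"
    using \<open>u \<le> 1\<close> \<open>A * E \<le> \<beta>E * F * u\<close> \<open>H \<ge> 0\<close> pos nu_bounds nn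
    by (intro diff_mono mult_left_le) (auto simp: mult.assoc)
  also have "\<dots> \<le> c_viol * (max 0 (M - kap * S) + max 0 ((1 - \<nu>) * \<nu>E * E - \<delta>M * M))"
    by (rule recruitment_excess_le[OF nn(1,2,4) H])
  finally show ?thesis .
qed

lemma T2_rate_bound:
  fixes E M S v2 v4 :: real
  assumes v2: "v2 = (1 - \<nu>) * \<nu>E * E - \<delta>M * M" and v4: "v4 = k * (M + S) - \<delta>s * S"
    and S: "S \<ge> 0" and g2: "kap * S - M \<le> 0"
  shows "- (kap * v4 - v2) \<le> max 0 ((1 - \<nu>) * \<nu>E * E - \<delta>M * M)"
proof -
  have "k * (kap * S) \<le> k * M" using g2 k_pos by (intro mult_left_mono) auto
  moreover have "0 \<le> S * (k * (1 + kap) - \<delta>s)" using S release_rate_gt by simp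
  ultimately have "v4 \<ge> 0" unfolding v4 by (simp add: algebra_simps)
  then have "kap * v4 \<ge> 0" using kap_pos by simp
  then show ?thesis unfolding v2 by (simp add: algebra_simps)
qed

lemma T3_rate_bound:
  fixes E M F v1 v2 :: real
  assumes v1: "v1 = \<beta>E * F * (1 - E / K) - A * E" and v2: "v2 = (1 - \<nu>) * \<nu>E * E - \<delta>M * M"
    and g3: "\<delta>M * M - (1 - \<nu>) * \<nu>E * E \<le> 0"
  shows "- (\<delta>M * v2 - (1 - \<nu>) * \<nu>E * v1) \<le> (1 - \<nu>) * \<nu>E * max 0 (\<beta>E * F * (1 - E / K) - A * E)"
proof -
  have "- (\<delta>M * v2 - (1 - \<nu>) * \<nu>E * v1)
          = \<delta>M * (\<delta>M * M - (1 - \<nu>) * \<nu>E * E) + (1 - \<nu>) * \<nu>E * (\<beta>E * F * (1 - E / K) - A * E)"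
    by (simp add: v1 v2 algebra_simps)
  moreover have "\<delta>M * (\<delta>M * M - (1 - \<nu>) * \<nu>E * E) \<le> 0"
    using g3 pos by (simp add: mult_nonneg_nonpos)
  moreover have "(1 - \<nu>) * \<nu>E * (\<beta>E * F * (1 - E / K) - A * E)
                   \<le> (1 - \<nu>) * \<nu>E * max 0 (\<beta>E * F * (1 - E / K) - A * E)"
    using nu_bounds pos by (intro mult_left_mono) auto
  ultimately show ?thesis by linarith
qed

definition "violation w = max 0 (- g1 w) + max 0 (- g2 w) + max 0 (- g3 w)" for w :: "real^4"

lemma violation_rate:
  assumes w: "z t \<in> Dprime" and v: "v \<in> filippov_set X Dprime (z t)"
    and der: "\<And>i. ((\<lambda>s. z s $ i) has_real_derivative v $ i) (at t within S)"
    and S: "S \<subseteq> {t<..}"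
  shows "right_dini_le (\<lambda>s. violation (z s)) t S
           ((c_viol + 1 + (1 - \<nu>) * \<nu>E) * violation (z t))"
proof -
  note vc = filippov_components[OF w v] and nn = Dprime_nonneg[OF w]
  define m1 where "m1 = max 0 (\<beta>E * z t $ 3 * (1 - z t $ 1 / K) - A * z t $ 1)"
  define m2 where "m2 = max 0 (z t $ 2 - kap * z t $ 4)"
  define m3 where "m3 = max 0 ((1 - \<nu>) * \<nu>E * z t $ 1 - \<delta>M * z t $ 2)"
  have m: "m1 \<ge> 0" "m2 \<ge> 0" "m3 \<ge> 0" by (auto simp: m1_def m2_def m3_def)
  have D1: "((\<lambda>s. - g1 (z s)) has_real_derivative
          - (A * v $ 1 - \<beta>E * (v $ 3 * (1 - z t $ 1 / K) - z t $ 3 * v $ 1 / K))) (at t within S)"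
    unfolding g1_def using pos by (auto intro!: derivative_eq_intros der simp: field_simps)
  have R1: "right_dini_le (\<lambda>s. max 0 (- g1 (z s))) t S (c_viol * (m2 + m3))"
  proof (rule right_dini_le_max0[OF D1 S])
    assume "- g1 (z t) \<ge> 0"
    then show "- (A * v $ 1 - \<beta>E * (v $ 3 * (1 - z t $ 1 / K) - z t $ 3 * v $ 1 / K))
        \<le> c_viol * (m2 + m3)"
      unfolding m2_def m3_def
      by (intro T1_rate_bound[OF nn nn nn nn]) (use vc in \<open>auto simp: X_components hh_def g1_def\<close>)
  qed (use c_viol_nonneg m in simp)
  have D2: "((\<lambda>s. - g2 (z s)) has_real_derivative - (kap * v $ 4 - v $ 2)) (at t within S)"
    unfolding g2_def by (auto intro!: derivative_eq_intros der)
  have R2: "right_dini_le (\<lambda>s. max 0 (- g2 (z s))) t S m3"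
  proof (rule right_dini_le_max0[OF D2 S])
    assume "- g2 (z t) \<ge> 0"
    then show "- (kap * v $ 4 - v $ 2) \<le> m3"
      unfolding m3_def by (intro T2_rate_bound) (use vc nn in \<open>auto simp: X_components g2_def\<close>)
  qed (use m in simp)
  have D3: "((\<lambda>s. - g3 (z s)) has_real_derivative - (\<delta>M * v $ 2 - (1 - \<nu>) * \<nu>E * v $ 1)) (at t within S)"
    unfolding g3_def by (auto intro!: derivative_eq_intros der)
  have R3: "right_dini_le (\<lambda>s. max 0 (- g3 (z s))) t S ((1 - \<nu>) * \<nu>E * m1)"
  proof (rule right_dini_le_max0[OF D3 S])
    assume "- g3 (z t) \<ge> 0"
    then show "- (\<delta>M * v $ 2 - (1 - \<nu>) * \<nu>E * v $ 1) \<le> (1 - \<nu>) * \<nu>E * m1"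
      unfolding m1_def by (intro T3_rate_bound) (use vc in \<open>auto simp: X_components g3_def\<close>)
  qed (use m nu_bounds pos in simp)
  have "right_dini_le (\<lambda>s. violation (z s)) t S (c_viol * (m2 + m3) + m3 + (1 - \<nu>) * \<nu>E * m1)"
    unfolding violation_def by (rule right_dini_le_add[OF right_dini_le_add[OF R1 R2] R3])
  moreover have "c_viol * (m2 + m3) + m3 + (1 - \<nu>) * \<nu>E * m1
      \<le> (c_viol + 1 + (1 - \<nu>) * \<nu>E) * violation (z t)"
  proof -
    have "violation (z t) = m1 + m2 + m3"
      by (simp add: violation_def m1_def m2_def m3_def g1_def g2_def g3_def)
    moreover have "0 \<le> c_viol * m1 + m1 + m2 + (1 - \<nu>) * \<nu>E * (m2 + m3)"
      using m c_viol_nonneg nu_bounds pos by simp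
    ultimately show ?thesis by (simp add: algebra_simps)
  qed
  ultimately show ?thesis using S by (rule right_dini_le_mono)
qed

lemma violation_pointwise_lipschitz:
  assumes "\<forall>t\<in>I. \<exists>\<delta>>0. \<exists>L. L-lipschitz_on (cball t \<delta> \<inter> I) z" "t \<in> I"
  shows "pointwise_lipschitz (\<lambda>s. violation (z s)) I t"
  unfolding violation_def g1_def g2_def g3_def
  by (intro pointwise_lipschitz_add pointwise_lipschitz_max0 pointwise_lipschitz_minus
      pointwise_lipschitz_diff pointwise_lipschitz_mult pointwise_lipschitz_const
      pointwise_lipschitz_divide_const pointwise_lipschitz_vec_nth[OF assms])

lemma invariance:
  assumes sol: "filippov_solution X Dprime z I" and I: "0 \<in> I" "I \<subseteq> {0..}"
    and z0: "z 0 \<in> MM" and t: "t \<in> I"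
  shows "z t \<in> MM"
proof -
  have interval: "is_interval I" and range: "z ` I \<subseteq> Dprime"
    and lip: "\<forall>t\<in>I. \<exists>\<delta>>0. \<exists>L. L-lipschitz_on (cball t \<delta> \<inter> I) z"
    using sol unfolding filippov_solution_def by auto
  obtain N where N: "N \<in> null_sets lebesgue" and vel: "\<And>t. t \<in> I - N \<Longrightarrow>
      \<exists>v\<in>filippov_set X Dprime (z t). \<forall>i. ((\<lambda>s. z s $ i) has_real_derivative v $ i) (at t within I \<inter> {t<..})"
    using filippov_solution_velocities[OF sol] by blast
  have "violation (z t) \<le> violation (z 0) * exp ((c_viol + 1 + (1 - \<nu>) * \<nu>E) * t)"
  proof (rule gronwall_right_dini[OF interval I _ _ _ _ t])
    show "negligible N" using N negligible_iff_null_sets by blast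
    fix s assume s: "s \<in> I - N"
    then obtain v where "v \<in> filippov_set X Dprime (z s)"
      "\<And>i. ((\<lambda>r. z r $ i) has_real_derivative v $ i) (at s within I \<inter> {s<..})"
      using vel by blast
    moreover have "z s \<in> Dprime" using range s by auto
    ultimately show "right_dini_le (\<lambda>s. violation (z s)) s (I \<inter> {s<..})
        ((c_viol + 1 + (1 - \<nu>) * \<nu>E) * violation (z s))"
      by (intro violation_rate) auto
  qed (use violation_pointwise_lipschitz[OF lip] in \<open>auto simp: violation_def\<close>)
  moreover have "violation (z 0) = 0" using z0 by (simp add: violation_def MM_iff)
  ultimately have "violation (z t) \<le> 0" by simp
  then show ?thesis using range t unfolding violation_def MM_iff by auto
qed

subsection \<open>Exponential decay\<close>

text \<open>Since \<open>\<rho> > 1 / \<kappa>\<close>, the fertile fraction \<open>M / (M + \<gamma>\<^sub>s M\<^sub>s)\<close> is at most \<open>H\<^sub>p < H\<^sub>q\<close>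
  wherever \<open>M\<^sub>s \<ge> \<rho> M\<close>, and \<open>H\<^sub>q\<close> is the fraction at which the wild population exactly
  replaces itself; the excess elsewhere is paid for by \<open>W = (\<rho> M - M\<^sub>s)\<^sup>+\<close>, which decays
  at rate \<open>\<lambda>\<close> because \<open>\<rho> < k / (\<delta>\<^sub>s - k)\<close>.  The weights make every coefficient of
  the derivative negative.\<close>

definition "rho = (1 / kap + k / (\<delta>s - k)) / 2"
definition "Hq = kap / (kap + \<gamma>s)"
definition "Hp = 1 / (1 + \<gamma>s * rho)"
definition "lam = k / rho"
definition "cw = \<delta>M * \<gamma>s / ((1 - \<nu>) * \<nu>E * (1 + \<gamma>s * rho))"
definition "eta = (Hq - Hp) / (2 * Hp)"
definition "wF = \<beta>E * (1 + eta) / \<delta>F"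
definition "mu = (A - \<beta>E * \<nu> * \<nu>E * Hp / \<delta>F) / 2"
definition "wM = mu / (2 * (1 - \<nu>) * \<nu>E)"
definition "wS = wM * \<delta>M / (2 * k)"
definition "wW = 2 * wF * \<nu> * \<nu>E * cw / lam"
definition "decay_rate = min (min (mu / 2) (eta * \<delta>F / (1 + eta))) (min (lam / 2) (min (\<delta>M / 2) (\<delta>s - k)))"
definition "lyap w = w $ 1 + wF * w $ 3 + wW * max 0 (rho * w $ 2 - w $ 4) + wM * w $ 2 + wS * w $ 4"
  for w :: "real^4"

lemma ds_minus_k_pos: "\<delta>s - k > 0" using k_hi by simp

lemma rho_bounds: "1 / kap < rho" "rho < k / (\<delta>s - k)"
proof -
  have "\<delta>s - k < k * kap" using release_rate_gt by (simp add: algebra_simps)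
  then have "1 / kap < k / (\<delta>s - k)" using kap_pos ds_minus_k_pos by (simp add: field_simps)
  moreover have "a < b \<Longrightarrow> a < (a + b) / 2 \<and> (a + b) / 2 < b" for a b :: real by simp
  ultimately show "1 / kap < rho" "rho < k / (\<delta>s - k)" unfolding rho_def by blast+
qed

lemma rho_pos: "rho > 0"
proof -
  have "1 / kap > 0" using kap_pos by simp
  then show ?thesis using rho_bounds(1) by linarith
qed

lemma rho_margin_pos: "k - (\<delta>s - k) * rho > 0"
  using rho_bounds(2) ds_minus_k_pos by (simp add: less_divide_eq mult.commute)

lemma Hq_eq: "Hq * (\<beta>E * \<nu> * \<nu>E) = \<delta>F * A"
proof -
  have "kap * (\<beta>E * \<nu> * \<nu>E) = \<delta>F * A * (kap + \<gamma>s)"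
    using kap_mult_P by (simp add: P_def algebra_simps)
  then show ?thesis using kap_pos gam by (simp add: Hq_def field_simps)
qed

lemma Hp_pos: "Hp > 0" using gam rho_pos by (simp add: Hp_def add_pos_pos)

lemma Hp_lt: "Hp < Hq"
proof -
  have "1 < kap * rho" using rho_bounds(1) kap_pos by (simp add: divide_less_eq mult.commute)
  then have "\<gamma>s < \<gamma>s * (kap * rho)" using gam by simp
  then have "kap + \<gamma>s < kap * (1 + \<gamma>s * rho)" by (simp add: algebra_simps)
  then show ?thesis using kap_pos gam rho_pos
    by (simp add: Hp_def Hq_def divide_less_eq less_divide_eq add_pos_pos mult.commute)
qed

lemma eta_pos: "eta > 0" using Hp_lt Hp_pos by (simp add: eta_def)

lemma eta_Hp: "(1 + eta) * Hp = (Hq + Hp) / 2"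
  using Hp_pos by (simp add: eta_def field_simps)

lemma mu_pos: "mu > 0"
proof -
  have "\<beta>E * \<nu> * \<nu>E * Hp < \<beta>E * \<nu> * \<nu>E * Hq" using Hp_lt pos nu_bounds by simp
  then have "\<beta>E * \<nu> * \<nu>E * Hp < \<delta>F * A" using Hq_eq by (simp add: mult.commute)
  then have "\<beta>E * \<nu> * \<nu>E * Hp / \<delta>F < A" using pos by (simp add: divide_less_eq mult.commute)
  then show ?thesis by (simp add: mu_def)
qed

lemma lam_pos: "lam > 0" using k_pos rho_pos by (simp add: lam_def)
lemma cw_pos: "cw > 0" using pos gam nu_bounds rho_pos by (simp add: cw_def add_pos_pos)
lemma wF_pos: "wF > 0" using pos eta_pos by (simp add: wF_def add_pos_pos)
lemma wM_pos: "wM > 0" using mu_pos nu_bounds pos by (simp add: wM_def)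
lemma wS_pos: "wS > 0" using wM_pos pos k_pos by (simp add: wS_def)
lemma wW_pos: "wW > 0" using wF_pos nu_bounds pos cw_pos lam_pos by (simp add: wW_def)
lemma decay_rate_pos: "decay_rate > 0"
  using mu_pos eta_pos pos lam_pos ds_minus_k_pos by (simp add: decay_rate_def add_pos_pos)

lemma lyap_coeff_E: "- A + wF * \<nu> * \<nu>E * Hp + wM * (1 - \<nu>) * \<nu>E = - mu / 2"
proof -
  have "wF * \<nu> * \<nu>E * Hp = (\<beta>E * \<nu> * \<nu>E) * ((1 + eta) * Hp) / \<delta>F" by (simp add: wF_def)
  also have "\<dots> = (\<beta>E * \<nu> * \<nu>E) * ((Hq + Hp) / 2) / \<delta>F" by (simp only: eta_Hp)
  also have "\<dots> = (\<beta>E * \<nu> * \<nu>E * Hq + \<beta>E * \<nu> * \<nu>E * Hp) / (2 * \<delta>F)" by (simp add: field_simps)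
  also have "\<dots> = (\<delta>F * A + \<beta>E * \<nu> * \<nu>E * Hp) / (2 * \<delta>F)" using Hq_eq by (simp add: mult.commute)
  also have "\<dots> = A / 2 + \<beta>E * \<nu> * \<nu>E * Hp / \<delta>F / 2" using pos by (simp add: field_simps)
  finally have 1: "wF * \<nu> * \<nu>E * Hp = A / 2 + \<beta>E * \<nu> * \<nu>E * Hp / \<delta>F / 2" .
  have 2: "wM * (1 - \<nu>) * \<nu>E = mu / 2" using nu_bounds pos by (simp add: wM_def field_simps)
  show ?thesis using 1 2 by (simp add: mu_def field_simps)
qed

lemma lyap_coeff_F: "\<beta>E - wF * \<delta>F = - (eta * \<delta>F / (1 + eta)) * wF"
proof -
  have ne: "1 + eta \<noteq> 0" "\<delta>F \<noteq> 0" using eta_pos pos by auto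
  have ne3: "\<delta>F + \<delta>F * eta \<noteq> 0" using ne by (metis distrib_left mult_eq_0_iff mult.right_neutral)
  have 1: "(eta * \<delta>F / (1 + eta)) * wF = eta * \<beta>E" unfolding wF_def using ne ne3 by (simp add: field_simps)
  have 2: "wF * \<delta>F = \<beta>E * (1 + eta)" unfolding wF_def using ne by simp
  show ?thesis using 1 2 by (simp add: algebra_simps)
qed

lemma lyap_coeff_W: "wF * \<nu> * \<nu>E * cw - wW * lam = - (lam / 2) * wW"
  using lam_pos by (simp add: wW_def field_simps)

lemma lyap_coeff_M: "- wM * \<delta>M + wS * k = - (\<delta>M / 2) * wM"
  using k_pos by (simp add: wS_def field_simps)

lemma lyap_coeff_S: "wS * k - wS * \<delta>s = - (\<delta>s - k) * wS"
  by (simp add: algebra_simps)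

lemma fertile_fraction_excess_le:
  fixes E M S H :: real
  assumes nn: "E \<ge> 0" "M \<ge> 0" "S \<ge> 0" and g3: "(1 - \<nu>) * \<nu>E * E \<le> \<delta>M * M"
    and H: "H = (if M + \<gamma>s * S = 0 then 1 else M / (M + \<gamma>s * S))"
  shows "E * H \<le> Hp * E + cw * max 0 (rho * M - S)"
proof -
  have q: "(1 - \<nu>) * \<nu>E > 0" using nu_bounds pos by simp
  have "\<gamma>s * S \<ge> 0" using nn gam by simp
  have W: "cw * max 0 (rho * M - S) \<ge> 0" using cw_pos by simp
  show ?thesis
  proof (cases "M + \<gamma>s * S = 0")
    case True
    then have "M = 0" using nn \<open>\<gamma>s * S \<ge> 0\<close> by linarith
    then have "(1 - \<nu>) * \<nu>E * E \<le> (1 - \<nu>) * \<nu>E * 0" using g3 by simp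
    then have "E = 0" using q nn by (simp only: mult_le_cancel_left_pos)
    then show ?thesis using W by simp
  next
    case False
    define D where "D = M + \<gamma>s * S"
    have D: "D > 0" "M \<le> D" using False nn \<open>\<gamma>s * S \<ge> 0\<close> unfolding D_def by linarith+
    have "1 + \<gamma>s * rho > 0" using gam rho_pos by (simp add: add_pos_pos)
    then have "E * (M / D) - Hp * E = \<gamma>s * (rho * M - S) * (E / D) / (1 + \<gamma>s * rho)"
      using D(1) unfolding Hp_def D_def by (simp add: field_simps)
    then have "E * H - Hp * E = \<gamma>s * (rho * M - S) * (E / D) / (1 + \<gamma>s * rho)"
      using H False by (simp add: D_def)
    also have "\<dots> \<le> cw * max 0 (rho * M - S)"
    proof (cases "rho * M - S \<le> 0")
      case True
      then have "\<gamma>s * (rho * M - S) \<le> 0" using gam by (simp add: mult_nonneg_nonpos)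
      moreover have "E / D \<ge> 0" using nn D by simp
      ultimately have "\<gamma>s * (rho * M - S) * (E / D) \<le> 0" by (rule mult_nonpos_nonneg)
      then have "\<gamma>s * (rho * M - S) * (E / D) / (1 + \<gamma>s * rho) \<le> 0"
        using \<open>1 + \<gamma>s * rho > 0\<close> by (rule divide_nonpos_pos)
      then show ?thesis using W by linarith
    next
      case False
      then have "rho * M > 0" using nn by linarith
      then have "M > 0" using rho_pos by (simp add: zero_less_mult_iff)
      have "E / D \<le> E / M" using nn D \<open>M > 0\<close> by (intro divide_left_mono) auto
      also have "\<dots> \<le> \<delta>M / ((1 - \<nu>) * \<nu>E)"
        using g3 \<open>M > 0\<close> q by (simp add: divide_le_eq le_divide_eq mult.commute mult.left_commute)
      finally have "\<gamma>s * (rho * M - S) * (E / D) / (1 + \<gamma>s * rho)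
          \<le> \<gamma>s * (rho * M - S) * (\<delta>M / ((1 - \<nu>) * \<nu>E)) / (1 + \<gamma>s * rho)"
        using False gam \<open>1 + \<gamma>s * rho > 0\<close> by (intro divide_right_mono mult_left_mono) auto
      then show ?thesis using False by (simp add: cw_def field_simps)
    qed
    finally show ?thesis by simp
  qed
qed

lemma W_rate_bound:
  fixes M S v2 v4 :: real
  assumes nn: "M \<ge> 0" "S \<ge> 0" and v2: "v2 \<le> 0" and v4: "v4 = k * (M + S) - \<delta>s * S"
    and W: "rho * M - S \<ge> 0"
  shows "rho * v2 - v4 \<le> - lam * (rho * M - S)"
proof -
  define Wv where "Wv = rho * M - S"
  have "rho * v2 \<le> 0" using v2 rho_pos by (simp add: mult_nonneg_nonpos)
  have Seq: "S = rho * M - Wv" by (simp add: Wv_def)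
  have "- v4 = - (k - (\<delta>s - k) * rho) * M - (\<delta>s - k) * Wv" by (simp add: v4 Seq algebra_simps)
  moreover have "(k - (\<delta>s - k) * rho) * (Wv / rho) \<le> (k - (\<delta>s - k) * rho) * M"
  proof -
    have "Wv / rho \<le> M" using nn rho_pos by (simp add: Wv_def divide_le_eq mult.commute)
    then show ?thesis using rho_margin_pos by (intro mult_left_mono) auto
  qed
  moreover have "(k - (\<delta>s - k) * rho) * (Wv / rho) + (\<delta>s - k) * Wv = lam * Wv"
    using rho_pos by (simp add: lam_def field_simps)
  ultimately have "- v4 \<le> - lam * Wv" by (simp add: algebra_simps)
  then show ?thesis using \<open>rho * v2 \<le> 0\<close> by (simp add: Wv_def)
qed

lemma decay_rate_le:
  "decay_rate \<le> mu / 2" "decay_rate \<le> eta * \<delta>F / (1 + eta)" "decay_rate \<le> lam / 2"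
  "decay_rate \<le> \<delta>M / 2" "decay_rate \<le> \<delta>s - k"
  unfolding decay_rate_def min_le_iff_disj by simp_all

lemma lyap_rate_bound:
  fixes E M F S v1 v2 v3 v4 Dw H :: real
  assumes nn: "E \<ge> 0" "M \<ge> 0" "F \<ge> 0" "S \<ge> 0" and g3: "(1 - \<nu>) * \<nu>E * E \<le> \<delta>M * M"
    and v1: "v1 = \<beta>E * F * (1 - E / K) - A * E" and v2: "v2 = (1 - \<nu>) * \<nu>E * E - \<delta>M * M"
    and v3: "v3 \<le> \<nu> * \<nu>E * E * H - \<delta>F * F"
    and H: "H = (if M + \<gamma>s * S = 0 then 1 else M / (M + \<gamma>s * S))"
    and v4: "v4 = k * (M + S) - \<delta>s * S"
    and Dw: "Dw \<le> - lam * max 0 (rho * M - S)"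
  shows "v1 + wF * v3 + wW * Dw + wM * v2 + wS * v4
          \<le> - decay_rate * (E + wF * F + wW * max 0 (rho * M - S) + wM * M + wS * S)"
proof -
  define W where "W = max 0 (rho * M - S)"
  have "W \<ge> 0" by (simp add: W_def)
  have "v1 \<le> \<beta>E * F - A * E"
  proof -
    have "\<beta>E * F * E / K \<ge> 0" using pos nn by simp
    then show ?thesis using pos by (simp add: v1 algebra_simps)
  qed
  moreover have "wF * v3 \<le> wF * (\<nu> * \<nu>E * (Hp * E + cw * W) - \<delta>F * F)"
  proof -
    have "E * H \<le> Hp * E + cw * W"
      unfolding W_def by (rule fertile_fraction_excess_le[OF nn(1,2,4) g3 H])
    then have "\<nu> * \<nu>E * (E * H) \<le> \<nu> * \<nu>E * (Hp * E + cw * W)"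
      using nu_bounds pos by (intro mult_left_mono) auto
    then have "v3 \<le> \<nu> * \<nu>E * (Hp * E + cw * W) - \<delta>F * F" using v3 by (simp add: mult.assoc)
    then show ?thesis using wF_pos by (intro mult_left_mono) auto
  qed
  moreover have "wW * Dw \<le> wW * (- lam * W)"
    using Dw wW_pos unfolding W_def by (intro mult_left_mono) auto
  ultimately have "v1 + wF * v3 + wW * Dw + wM * v2 + wS * v4 \<le>
      (\<beta>E * F - A * E) + wF * (\<nu> * \<nu>E * (Hp * E + cw * W) - \<delta>F * F) + wW * (- lam * W)
      + wM * ((1 - \<nu>) * \<nu>E * E - \<delta>M * M) + wS * (k * (M + S) - \<delta>s * S)"
    by (simp add: v2 v4)
  also have "\<dots> = (- A + wF * \<nu> * \<nu>E * Hp + wM * (1 - \<nu>) * \<nu>E) * E + (\<beta>E - wF * \<delta>F) * F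
      + (wF * \<nu> * \<nu>E * cw - wW * lam) * W + (- wM * \<delta>M + wS * k) * M + (wS * k - wS * \<delta>s) * S"
    by (simp add: algebra_simps)
  also have "\<dots> = - (mu / 2) * E - (eta * \<delta>F / (1 + eta)) * (wF * F) - (lam / 2) * (wW * W)
      - (\<delta>M / 2) * (wM * M) - (\<delta>s - k) * (wS * S)"
    unfolding lyap_coeff_E lyap_coeff_F lyap_coeff_W lyap_coeff_M lyap_coeff_S by (simp add: algebra_simps)
  also have "\<dots> \<le> - decay_rate * E - decay_rate * (wF * F) - decay_rate * (wW * W)
      - decay_rate * (wM * M) - decay_rate * (wS * S)"
    using decay_rate_le nn \<open>W \<ge> 0\<close> wF_pos wW_pos wM_pos wS_pos
    by (intro diff_mono add_mono mult_right_mono) (auto simp: minus_mult_left[symmetric])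
  finally show ?thesis by (simp add: W_def algebra_simps)
qed

lemma lyap_rate:
  assumes w: "z t \<in> MM" and v: "v \<in> filippov_set X Dprime (z t)"
    and der: "\<And>i. ((\<lambda>s. z s $ i) has_real_derivative v $ i) (at t within S)"
    and S: "S \<subseteq> {t<..}"
  shows "right_dini_le (\<lambda>s. lyap (z s)) t S (- decay_rate * lyap (z t))"
proof -
  have zt: "z t \<in> Dprime" and g3: "(1 - \<nu>) * \<nu>E * z t $ 1 \<le> \<delta>M * z t $ 2"
    using w by (auto simp: MM_iff g3_def)
  note vc = filippov_components[OF zt v] and nn = Dprime_nonneg[OF zt]
  have DW: "((\<lambda>s. rho * z s $ 2 - z s $ 4) has_real_derivative rho * v $ 2 - v $ 4) (at t within S)"
    by (auto intro!: derivative_eq_intros der)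
  define Dw where "Dw = - lam * max 0 (rho * z t $ 2 - z t $ 4)"
  have "right_dini_le (\<lambda>s. max 0 (rho * z s $ 2 - z s $ 4)) t S Dw"
  proof (rule right_dini_le_max0[OF DW S])
    assume "rho * z t $ 2 - z t $ 4 \<ge> 0"
    moreover have "v $ 2 \<le> 0" using vc g3 by (simp add: X_components)
    ultimately show "rho * v $ 2 - v $ 4 \<le> Dw"
      unfolding Dw_def using W_rate_bound[OF nn nn] vc by (simp add: X_components)
  qed (simp add: Dw_def)
  moreover have "wF \<ge> 0" "wW \<ge> 0" "wM \<ge> 0" "wS \<ge> 0"
    using wF_pos wW_pos wM_pos wS_pos by simp_all
  moreover note d = right_dini_le_if_has_real_derivative[OF der S]
  ultimately have "right_dini_le (\<lambda>s. lyap (z s)) t S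
      (v $ 1 + wF * v $ 3 + wW * Dw + wM * v $ 2 + wS * v $ 4)"
    unfolding lyap_def using S
    by (intro right_dini_le_add right_dini_le_cmult d)
  moreover have "v $ 1 + wF * v $ 3 + wW * Dw + wM * v $ 2 + wS * v $ 4 \<le> - decay_rate * lyap (z t)"
    unfolding lyap_def
    by (rule lyap_rate_bound[OF nn nn nn nn g3]) (use vc in \<open>auto simp: X_components hh_def Dw_def\<close>)
  ultimately show ?thesis using S by (rule right_dini_le_mono)
qed

lemma lyap_decay:
  assumes sol: "filippov_solution X Dprime z {0..}" and z0: "z 0 \<in> MM" and t: "t \<ge> 0"
  shows "lyap (z t) \<le> lyap (z 0) * exp (- decay_rate * t)"
proof -
  have inv: "s \<ge> 0 \<Longrightarrow> z s \<in> MM" for s using invariance[OF sol _ _ z0] by simp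
  have lip: "\<forall>t\<in>{0..}. \<exists>\<delta>>0. \<exists>L. L-lipschitz_on (cball t \<delta> \<inter> {0..}) z"
    using sol unfolding filippov_solution_def by auto
  obtain N where N: "N \<in> null_sets lebesgue" and vel: "\<And>t. t \<in> {0..} - N \<Longrightarrow>
      \<exists>v\<in>filippov_set X Dprime (z t). \<forall>i. ((\<lambda>s. z s $ i) has_real_derivative v $ i) (at t within {0..} \<inter> {t<..})"
    using filippov_solution_velocities[OF sol] by blast
  show ?thesis
  proof (rule gronwall_right_dini[where I = "{0..}"])
    show "negligible N" using N negligible_iff_null_sets by blast
    fix s :: real assume "s \<in> {0..}"
    then show "pointwise_lipschitz (\<lambda>s. lyap (z s)) {0..} s"
      unfolding lyap_def
      by (intro pointwise_lipschitz_add pointwise_lipschitz_mult pointwise_lipschitz_const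
          pointwise_lipschitz_max0 pointwise_lipschitz_diff pointwise_lipschitz_vec_nth[OF lip])
    show "lyap (z s) \<ge> 0"
      using inv[of s] \<open>s \<in> {0..}\<close> Dprime_nonneg[of "z s"] wF_pos wW_pos wM_pos wS_pos
      by (simp add: MM_iff lyap_def)
  next
    fix s :: real assume "s \<in> {0..} - N"
    then obtain v where "v \<in> filippov_set X Dprime (z s)"
      "\<And>i. ((\<lambda>r. z r $ i) has_real_derivative v $ i) (at s within {0..} \<inter> {s<..})"
      using vel by blast
    then show "right_dini_le (\<lambda>s. lyap (z s)) s ({0..} \<inter> {s<..}) (- decay_rate * lyap (z s))"
      using inv[of s] \<open>s \<in> {0..} - N\<close> by (intro lyap_rate) auto
  qed (use t in \<open>auto simp: is_interval_ci\<close>)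
qed

definition "lyap_lower = min 1 (min wF (min wM wS))"
definition "lyap_upper = 1 + wF + wW * rho + wM + wS"

lemma lyap_lower_pos: "lyap_lower > 0"
  using wF_pos wM_pos wS_pos by (simp add: lyap_lower_def)

lemma lyap_upper_pos: "lyap_upper > 0"
  using wF_pos wM_pos wS_pos wW_pos rho_pos by (simp add: lyap_upper_def add_pos_pos)

lemma lyap_ge:
  assumes w: "w \<in> Dprime"
  shows "lyap_lower * norm w \<le> lyap w"
proof -
  note nn = Dprime_nonneg[OF w]
  have "norm w \<le> w $ 1 + w $ 2 + w $ 3 + w $ 4"
    using norm_le_l1_cart[of w] nn by (simp add: sum_4)
  then have "lyap_lower * norm w \<le> lyap_lower * (w $ 1 + w $ 2 + w $ 3 + w $ 4)"
    using lyap_lower_pos by simp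
  also have "\<dots> = lyap_lower * w $ 1 + lyap_lower * w $ 3 + lyap_lower * w $ 2 + lyap_lower * w $ 4"
    by (simp add: algebra_simps)
  also have "\<dots> \<le> 1 * w $ 1 + wF * w $ 3 + wM * w $ 2 + wS * w $ 4"
    using nn by (intro add_mono mult_right_mono) (auto simp: lyap_lower_def)
  also have "\<dots> \<le> lyap w" using wW_pos by (simp add: lyap_def)
  finally show ?thesis .
qed

lemma lyap_le:
  assumes w: "w \<in> Dprime"
  shows "lyap w \<le> 4 * lyap_upper * norm w"
proof -
  note nn = Dprime_nonneg[OF w]
  have comp: "w $ i \<le> norm w" for i
    using component_le_norm_cart[of w i] by simp
  have "max 0 (rho * w $ 2 - w $ 4) \<le> rho * w $ 2" using nn rho_pos by simp
  then have "lyap w \<le> w $ 1 + wF * w $ 3 + wW * (rho * w $ 2) + wM * w $ 2 + wS * w $ 4"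
    using wW_pos unfolding lyap_def by (simp add: mult_left_mono)
  also have "\<dots> \<le> norm w + wF * norm w + wW * (rho * norm w) + wM * norm w + wS * norm w"
    using comp wF_pos wW_pos wM_pos wS_pos rho_pos
    by (intro add_mono mult_left_mono) auto
  also have "\<dots> = lyap_upper * norm w" by (simp add: lyap_upper_def algebra_simps)
  also have "\<dots> \<le> 4 * lyap_upper * norm w" using lyap_upper_pos by simp
  finally show ?thesis .
qed

definition "overshoot = 4 * lyap_upper / lyap_lower"

lemma exponential_estimate:
  assumes sol: "filippov_solution X Dprime z {0..}" and z0: "z 0 \<in> MM" and t: "t \<ge> 0"
  shows "norm (z t) \<le> overshoot * norm (z 0) * exp (- decay_rate * t)"
proof -
  have "z t \<in> Dprime" "z 0 \<in> Dprime" using invariance[OF sol _ _ z0, of t] z0 t by (auto simp: MM_iff)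
  then have "lyap_lower * norm (z t) \<le> 4 * lyap_upper * norm (z 0) * exp (- decay_rate * t)"
    using lyap_ge lyap_le lyap_decay[OF sol z0 t] by (meson mult_right_mono exp_ge_zero order_trans)
  then show ?thesis using lyap_lower_pos by (simp add: overshoot_def field_simps)
qed

lemma lyapunov_stable:
  assumes "\<epsilon> > 0"
  shows "\<exists>\<delta>>0. \<forall>z. filippov_solution X Dprime z {0..} \<and> z 0 \<in> MM \<and> norm (z 0) < \<delta>
           \<longrightarrow> (\<forall>t>0. norm (z t) < \<epsilon>)"
proof (intro exI conjI allI impI)
  have "overshoot > 0" using lyap_lower_pos lyap_upper_pos by (simp add: overshoot_def)
  then show "\<epsilon> / overshoot > 0" using assms by simp
  fix z t assume z: "filippov_solution X Dprime z {0..} \<and> z 0 \<in> MM \<and> norm (z 0) < \<epsilon> / overshoot"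
    and t: "(t::real) > 0"
  have "norm (z t) \<le> overshoot * norm (z 0) * exp (- decay_rate * t)"
    using exponential_estimate z t by simp
  also have "\<dots> \<le> overshoot * norm (z 0)"
    using decay_rate_pos t \<open>overshoot > 0\<close> by (simp add: mult_left_le)
  also have "\<dots> < \<epsilon>" using z \<open>overshoot > 0\<close> by (simp add: field_simps)
  finally show "norm (z t) < \<epsilon>" .
qed

lemma attractive:
  assumes sol: "filippov_solution X Dprime z {0..}" and z0: "z 0 \<in> MM"
  shows "(z \<longlongrightarrow> 0) at_top"
proof (rule Lim_null_comparison)
  show "eventually (\<lambda>t. norm (z t) \<le> overshoot * norm (z 0) * exp (- decay_rate * t)) at_top"
    using eventually_ge_at_top[of 0] by eventually_elim (rule exponential_estimate[OF sol z0])
  have "filterlim (\<lambda>t. - decay_rate * t) at_bot at_top"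
    using decay_rate_pos by (intro filterlim_tendsto_neg_mult_at_bot[OF tendsto_const _ filterlim_ident]) simp
  then have "((\<lambda>t. exp (- decay_rate * t)) \<longlongrightarrow> 0) at_top"
    by (rule filterlim_compose[OF exp_at_bot])
  then show "((\<lambda>t. overshoot * norm (z 0) * exp (- decay_rate * t)) \<longlongrightarrow> 0) at_top"
    using tendsto_mult_right_zero by blast
qed

end

theorem theorem6:
  fixes \<beta>E \<nu>E \<delta>E \<delta>M \<delta>F \<delta>s K \<nu> \<gamma>s k :: real
  assumes pos: "\<beta>E > 0" "\<nu>E > 0" "\<delta>E > 0" "\<delta>M > 0" "\<delta>F > 0" "\<delta>s > 0" "K > 0"
    and nu: "0 < \<nu>" "\<nu> < 1"
    and gam: "0 < \<gamma>s" "\<gamma>s \<le> 1"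
    and dsM: "\<delta>s \<ge> \<delta>M"
    and R0: "R0 \<beta>E \<nu>E \<delta>E \<delta>F \<nu> > 1"
    and k_lo: "(\<beta>E * \<nu> * \<nu>E - (\<nu>E + \<delta>E) * \<delta>F)
                / (\<beta>E * \<nu> * \<nu>E - (1 - \<gamma>s) * (\<nu>E + \<delta>E) * \<delta>F) * \<delta>s < k"
    and k_hi: "k < \<delta>s"
  defines "X \<equiv> closed_loop \<beta>E \<nu>E \<delta>E \<delta>M \<delta>F \<delta>s K \<nu> \<gamma>s k"
    and "MM \<equiv> Mset \<beta>E \<nu>E \<delta>E \<delta>M K \<nu> (kappa_bar \<beta>E \<nu>E \<delta>E \<delta>F \<nu> \<gamma>s)"
  shows
    "(\<forall>z I. filippov_solution X Dprime z I \<and> 0 \<in> I \<and> I \<subseteq> {0..} \<and> z 0 \<in> MM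
              \<longrightarrow> (\<forall>t\<in>I. z t \<in> MM))
     \<and> (\<forall>\<epsilon>>0. \<exists>\<delta>>0. \<forall>z. filippov_solution X Dprime z {0..} \<and> z 0 \<in> MM \<and> norm (z 0) < \<delta>
              \<longrightarrow> (\<forall>t>0. norm (z t) < \<epsilon>))
     \<and> (\<forall>z. filippov_solution X Dprime z {0..} \<and> z 0 \<in> MM \<longrightarrow> (z \<longlongrightarrow> 0) at_top)"
proof -
  interpret s: sit_feedback \<beta>E \<nu>E \<delta>E \<delta>M \<delta>F \<delta>s K \<nu> \<gamma>s k
    by unfold_locales (use pos nu gam R0 k_lo k_hi in auto)
  have "X = s.X" "MM = s.MM" unfolding X_def MM_def s.X_def s.MM_def s.kap_def by simp_all
  then show ?thesis using s.invariance s.lyapunov_stable s.attractive by blast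
qed

end
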